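(* Let $k$ be a left Noetherian ring. Any submodule of a finitely generated $\mathrm{FS}_B^{\mathrm{op}}$-module over $k$ is itself finitely generated.
   Context: $\mathrm{FS}_B$ is the category whose objects are pairs $(E,\sigma)$ with $E$ a finite set and $\sigma:E\to E$ an involution with exactly one fixed point, and whose morphisms $(E_1,\sigma_1)\to(E_2,\sigma_2)$ are surjective maps $\varphi:E_1\to E_2$ with $\varphi\circ\sigma_1=\sigma_2\circ\varphi$. Every object is isomorphic to $[-n,n]=\{-n,\dots,n\}$ with involution $k\mapsto -k$, for some $n\in\mathbb N$. An $\mathrm{FS}_B^{\mathrm{op}}$-module over $k$ is a contravariant functor from $\mathrm{FS}_B$ to the category of left $k$-modules. For an object $x$, the principal projective $P_x$ is the module sending $y$ to the free $k$-module with basis $\mathrm{Hom}_{\mathrm{FS}_B}(y,x)$, with maps given on basis elements by composition. A module $M$ is finitely generated if there are finitely many objects $x_1,\dots,x_r$ and a surjection $\bigoplus_i P_{x_i}\to M$. *)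

theory Defs
  imports Main "HOL-Library.FuncSet"
begin

definition left_ideal :: "'k::ring_1 set \<Rightarrow> bool" where
  "left_ideal I \<longleftrightarrow> 0 \<in> I \<and> (\<forall>x\<in>I. \<forall>y\<in>I. x + y \<in> I) \<and> (\<forall>x\<in>I. - x \<in> I)
     \<and> (\<forall>r. \<forall>x\<in>I. r * x \<in> I)"

definition left_noetherian :: "'k::ring_1 itself \<Rightarrow> bool" where
  "left_noetherian _ \<longleftrightarrow>
     (\<forall>I :: nat \<Rightarrow> 'k set. (\<forall>n. left_ideal (I n)) \<and> (\<forall>n. I n \<subseteq> I (Suc n))
        \<longrightarrow> (\<exists>N. \<forall>n\<ge>N. I n = I N))"

definition left_module ::
  "'m set \<Rightarrow> ('m \<Rightarrow> 'm \<Rightarrow> 'm) \<Rightarrow> 'm \<Rightarrow> ('k::ring_1 \<Rightarrow> 'm \<Rightarrow> 'm) \<Rightarrow> bool" where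
  "left_module V add z sc \<longleftrightarrow>
     z \<in> V \<and> (\<forall>x\<in>V. \<forall>y\<in>V. add x y \<in> V) \<and> (\<forall>a. \<forall>x\<in>V. sc a x \<in> V)
     \<and> (\<forall>x\<in>V. \<forall>y\<in>V. \<forall>w\<in>V. add (add x y) w = add x (add y w))
     \<and> (\<forall>x\<in>V. \<forall>y\<in>V. add x y = add y x)
     \<and> (\<forall>x\<in>V. add z x = x)
     \<and> (\<forall>x\<in>V. \<exists>y\<in>V. add x y = z)
     \<and> (\<forall>a. \<forall>x\<in>V. \<forall>y\<in>V. sc a (add x y) = add (sc a x) (sc a y))
     \<and> (\<forall>a b. \<forall>x\<in>V. sc (a + b) x = add (sc a x) (sc b x))
     \<and> (\<forall>a b. \<forall>x\<in>V. sc (a * b) x = sc a (sc b x))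
     \<and> (\<forall>x\<in>V. sc 1 x = x)"

text \<open>The object n is [-n,n] = {-n..n} (as integers) with involution i \<mapsto> -i.
  Every object of FS_B is isomorphic to one of these.\<close>

definition symI :: "nat \<Rightarrow> int set" where
  "symI n = {- int n .. int n}"

text \<open>Morphisms [-m,m] \<rightarrow> [-n,n]: surjective maps commuting with the involutions,
  represented extensionally (value undefined outside [-m,m]).\<close>
definition FSB_hom :: "nat \<Rightarrow> nat \<Rightarrow> (int \<Rightarrow> int) set" where
  "FSB_hom m n = {\<phi> \<in> symI m \<rightarrow>\<^sub>E symI n. \<phi> ` symI m = symI n \<and> (\<forall>i\<in>symI m. \<phi> (- i) = - \<phi> i)}"

definition FSB_id :: "nat \<Rightarrow> int \<Rightarrow> int" where
  "FSB_id n = restrict id (symI n)"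

text \<open>Composition of \<phi> : l \<rightarrow> m followed by \<psi> : m \<rightarrow> n.\<close>
definition FSB_comp :: "nat \<Rightarrow> (int \<Rightarrow> int) \<Rightarrow> (int \<Rightarrow> int) \<Rightarrow> int \<Rightarrow> int" where
  "FSB_comp l \<psi> \<phi> = compose (symI l) \<psi> \<phi>"

text \<open>An FS_B^op-module M over k: a left k-module C n (carrier, addition, zero, scalar
  multiplication, all indexed by the object n), and for each morphism \<phi> : m \<rightarrow> n a
  k-linear map act m n \<phi> : M(n) \<rightarrow> M(m), contravariantly functorial.\<close>
definition FSBop_module ::
  "(nat \<Rightarrow> 'm set) \<Rightarrow> (nat \<Rightarrow> 'm \<Rightarrow> 'm \<Rightarrow> 'm) \<Rightarrow> (nat \<Rightarrow> 'm) \<Rightarrow> (nat \<Rightarrow> 'k::ring_1 \<Rightarrow> 'm \<Rightarrow> 'm)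
    \<Rightarrow> (nat \<Rightarrow> nat \<Rightarrow> (int \<Rightarrow> int) \<Rightarrow> 'm \<Rightarrow> 'm) \<Rightarrow> bool" where
  "FSBop_module C add z sc act \<longleftrightarrow>
     (\<forall>n. left_module (C n) (add n) (z n) (sc n))
     \<and> (\<forall>m n. \<forall>\<phi>\<in>FSB_hom m n.
           (\<forall>x\<in>C n. act m n \<phi> x \<in> C m)
         \<and> (\<forall>x\<in>C n. \<forall>y\<in>C n. act m n \<phi> (add n x y) = add m (act m n \<phi> x) (act m n \<phi> y))
         \<and> (\<forall>a. \<forall>x\<in>C n. act m n \<phi> (sc n a x) = sc m a (act m n \<phi> x)))
     \<and> (\<forall>n. \<forall>x\<in>C n. act n n (FSB_id n) x = x)
     \<and> (\<forall>l m n. \<forall>\<phi>\<in>FSB_hom l m. \<forall>\<psi>\<in>FSB_hom m n. \<forall>x\<in>C n.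
           act l n (FSB_comp l \<psi> \<phi>) x = act l m \<phi> (act m n \<psi> x))"

definition FSBop_submodule ::
  "(nat \<Rightarrow> 'm set) \<Rightarrow> (nat \<Rightarrow> 'm \<Rightarrow> 'm \<Rightarrow> 'm) \<Rightarrow> (nat \<Rightarrow> 'm) \<Rightarrow> (nat \<Rightarrow> 'k::ring_1 \<Rightarrow> 'm \<Rightarrow> 'm)
    \<Rightarrow> (nat \<Rightarrow> nat \<Rightarrow> (int \<Rightarrow> int) \<Rightarrow> 'm \<Rightarrow> 'm) \<Rightarrow> (nat \<Rightarrow> 'm set) \<Rightarrow> bool" where
  "FSBop_submodule C add z sc act N \<longleftrightarrow>
     (\<forall>n. N n \<subseteq> C n \<and> z n \<in> N n
          \<and> (\<forall>x\<in>N n. \<forall>y\<in>N n. add n x y \<in> N n)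
          \<and> (\<forall>a. \<forall>x\<in>N n. sc n a x \<in> N n))
     \<and> (\<forall>m n. \<forall>\<phi>\<in>FSB_hom m n. \<forall>x\<in>N n. act m n \<phi> x \<in> N m)"

text \<open>For objects xs = [x_0,...,x_{r-1}], (P_{x_0} \<oplus> ... \<oplus> P_{x_{r-1}})(y) is the free k-module
  with basis the pairs (i,\<phi>) with i < r and \<phi> \<in> Hom(y, x_i); we represent its elements
  as coefficient functions vanishing off the basis.\<close>

definition sumP_basis :: "nat list \<Rightarrow> nat \<Rightarrow> (nat \<times> (int \<Rightarrow> int)) set" where
  "sumP_basis xs y = {(i, \<phi>). i < length xs \<and> \<phi> \<in> FSB_hom y (xs ! i)}"

definition sumP :: "nat list \<Rightarrow> nat \<Rightarrow> (nat \<times> (int \<Rightarrow> int) \<Rightarrow> 'k::ring_1) set" where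
  "sumP xs y = {c. \<forall>p. p \<notin> sumP_basis xs y \<longrightarrow> c p = 0}"

text \<open>The map (P_x)(\<psi>) : P_x(y) \<rightarrow> P_x(y') for \<psi> : y' \<rightarrow> y, sending the basis element \<phi> to
  \<phi> \<circ> \<psi>, written on coefficient functions.\<close>
definition sumP_act ::
  "nat list \<Rightarrow> nat \<Rightarrow> nat \<Rightarrow> (int \<Rightarrow> int) \<Rightarrow> (nat \<times> (int \<Rightarrow> int) \<Rightarrow> 'k::ring_1)
     \<Rightarrow> (nat \<times> (int \<Rightarrow> int) \<Rightarrow> 'k)" where
  "sumP_act xs y' y \<psi> c = (\<lambda>(i, \<phi>').
     if (i, \<phi>') \<in> sumP_basis xs y' then
       (\<Sum>\<phi>\<in>{\<phi> \<in> FSB_hom y (xs ! i). FSB_comp y' \<phi> \<psi> = \<phi>'}. c (i, \<phi>))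
     else 0)"

text \<open>M is finitely generated: there are objects x_1..x_r and a surjective morphism of
  FS_B^op-modules (natural transformation, k-linear in each component)
  P_{x_1} \<oplus> ... \<oplus> P_{x_r} \<rightarrow> M.\<close>
definition FSBop_fg ::
  "(nat \<Rightarrow> 'm set) \<Rightarrow> (nat \<Rightarrow> 'm \<Rightarrow> 'm \<Rightarrow> 'm) \<Rightarrow> (nat \<Rightarrow> 'm) \<Rightarrow> (nat \<Rightarrow> 'k::ring_1 \<Rightarrow> 'm \<Rightarrow> 'm)
    \<Rightarrow> (nat \<Rightarrow> nat \<Rightarrow> (int \<Rightarrow> int) \<Rightarrow> 'm \<Rightarrow> 'm) \<Rightarrow> bool" where
  "FSBop_fg C add z sc act \<longleftrightarrow>
     (\<exists>(xs :: nat list) (F :: nat \<Rightarrow> (nat \<times> (int \<Rightarrow> int) \<Rightarrow> 'k) \<Rightarrow> 'm).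
        (\<forall>y. \<forall>c\<in>sumP xs y. F y c \<in> C y)
      \<and> (\<forall>y. \<forall>c\<in>sumP xs y. \<forall>d\<in>sumP xs y. F y (\<lambda>p. c p + d p) = add y (F y c) (F y d))
      \<and> (\<forall>y a. \<forall>c\<in>sumP xs y. F y (\<lambda>p. a * c p) = sc y a (F y c))
      \<and> (\<forall>y y'. \<forall>\<psi>\<in>FSB_hom y' y. \<forall>c\<in>sumP xs y.
           F y' (sumP_act xs y' y \<psi> c) = act y' y \<psi> (F y c))
      \<and> (\<forall>y. F y ` sumP xs y = C y))"

end

theory Submission
  imports Defs "HOL-Library.Sublist" "HOL-Library.Infinite_Set" "HOL-Library.Ramsey"
    "HOL-Library.Product_Lexorder" "HOL-Library.List_Lexorder"
begin

(* Groebner-basis argument.  A basis element of (\<Oplus>P_xs)(y) is a pair (i, w) with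
   w : [-y,y] \<rightarrow> [-x_i,x_i]; order them lexicographically by (i, w 1, ..., w y).
   Precomposition with an ordered surjection \<psi> preserves this order, and the divisibility
   "w' = w \<circ> \<psi> for an ordered surjection \<psi>" is a well-quasi-order on all basis elements:
   encode w as a word over a finite alphabet and apply Higman's lemma; a subword embedding
   produces \<psi>.  For a submodule Q, the leading coefficients at b of the elements of Q with
   leading term b form a left ideal of k that grows along divisibility.  The well-quasi-order
   together with the ascending chain condition yields finitely many elements of Q whose
   translates have all possible leading terms and coefficients, and the division algorithm
   shows that they generate Q.  A submodule N of a quotient F of \<Oplus>P_xs is the image of
   its preimage, hence finitely generated. *)

section \<open>Well-quasi-orders\<close>

definition bad_seq :: "'a set \<Rightarrow> (nat \<Rightarrow> 'a list) \<Rightarrow> bool" where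
  "bad_seq A f \<longleftrightarrow> (\<forall>n. set (f n) \<subseteq> A) \<and> (\<forall>i j. i < j \<longrightarrow> \<not> subseq (f i) (f j))"

definition bad_continuations :: "'a set \<Rightarrow> 'a list list \<Rightarrow> 'a list set" where
  "bad_continuations A ps = {f (length ps) | f. bad_seq A f \<and> (\<forall>i<length ps. f i = ps ! i)}"

primrec minimal_bad_prefix :: "'a set \<Rightarrow> nat \<Rightarrow> 'a list list" where
  "minimal_bad_prefix A 0 = []"
| "minimal_bad_prefix A (Suc n) = minimal_bad_prefix A n
     @ [ARG_MIN length w. w \<in> bad_continuations A (minimal_bad_prefix A n)]"

lemma length_minimal_bad_prefix [simp]: "length (minimal_bad_prefix A n) = n"
  by (induction n) auto

lemma minimal_bad_prefix_extends:
  assumes "bad_seq A f0"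
  shows "\<exists>f. bad_seq A f \<and> (\<forall>i<n. f i = minimal_bad_prefix A n ! i)"
proof (induction n)
  case 0
  then show ?case using assms by auto
next
  case (Suc n)
  let ?ps = "minimal_bad_prefix A n"
  from Suc obtain f where "bad_seq A f" "\<forall>i<n. f i = ?ps ! i" by blast
  then have "f n \<in> bad_continuations A ?ps"
    unfolding bad_continuations_def by (auto intro!: exI[of _ f])
  then have "(ARG_MIN length w. w \<in> bad_continuations A ?ps) \<in> bad_continuations A ?ps"
    by (rule arg_min_nat_lemma[THEN conjunct1])
  then obtain g where "bad_seq A g" "\<forall>i<n. g i = ?ps ! i"
    "g n = (ARG_MIN length w. w \<in> bad_continuations A ?ps)"
    unfolding bad_continuations_def by auto
  then show ?case by (auto simp: nth_append less_Suc_eq intro!: exI[of _ g])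
qed

lemma minimal_bad_prefix_nth:
  "n \<le> k \<Longrightarrow> i < n \<Longrightarrow> minimal_bad_prefix A k ! i = minimal_bad_prefix A n ! i"
  by (induction k) (auto simp: nth_append le_Suc_eq)

text \<open>Nash-Williams' minimal bad sequence argument: removing the common first letter
  from infinitely many members of a minimal bad sequence yields a shorter bad sequence.\<close>

theorem higman:
  fixes f :: "nat \<Rightarrow> 'a list"
  assumes "finite A" "\<And>n. set (f n) \<subseteq> A"
  shows "\<exists>i j. i < j \<and> subseq (f i) (f j)"
proof (rule ccontr)
  assume "\<not> ?thesis"
  then have bad_f: "bad_seq A f" using assms(2) unfolding bad_seq_def by blast
  define m where "m n = minimal_bad_prefix A (Suc n) ! n" for n
  have m_prefix: "minimal_bad_prefix A k ! i = m i" if "i < k" for i k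
    unfolding m_def using minimal_bad_prefix_nth[of "Suc i" k i A] that
    by (simp del: minimal_bad_prefix.simps)
  have bad_extension: "\<exists>g. bad_seq A g \<and> (\<forall>i<n. g i = m i)" for n
    using minimal_bad_prefix_extends[OF bad_f, of n] m_prefix by auto
  have bad_m: "bad_seq A m"
    unfolding bad_seq_def
  proof (intro allI impI conjI)
    fix n
    obtain g where "bad_seq A g" "\<forall>i<Suc n. g i = m i" using bad_extension by blast
    moreover have "g n = m n" using calculation(2) by simp
    ultimately show "set (m n) \<subseteq> A" unfolding bad_seq_def by metis
  next
    fix i j :: nat assume "i < j"
    obtain g where "bad_seq A g" "\<forall>k<Suc j. g k = m k" using bad_extension by blast
    moreover have "g i = m i" "g j = m j" using calculation(2) \<open>i < j\<close> by simp_all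
    ultimately show "\<not> subseq (m i) (m j)" using \<open>i < j\<close> unfolding bad_seq_def by metis
  qed
  have m_minimal: "length (m n) \<le> length (g n)" if "bad_seq A g" "\<forall>i<n. g i = m i" for g n
  proof -
    have "g n \<in> bad_continuations A (minimal_bad_prefix A n)"
      unfolding bad_continuations_def using that m_prefix by (auto intro!: exI[of _ g])
    then show ?thesis
      unfolding m_def by (simp add: nth_append arg_min_nat_le)
  qed
  have m_nonempty: "m n \<noteq> []" for n
  proof
    assume "m n = []"
    then have "subseq (m n) (m (Suc n))" by simp
    then show False using bad_m unfolding bad_seq_def by blast
  qed
  have "hd (m n) \<in> A" for n
    using bad_m m_nonempty unfolding bad_seq_def by (meson hd_in_set subsetD)
  then have "finite (range (hd \<circ> m))" using assms(1) by (auto intro: finite_subset)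
  then obtain a where "infinite ((hd \<circ> m) -` {a})"
    using inf_img_fin_domE[OF _ infinite_UNIV_nat] by blast
  then have inf_S: "infinite {n. hd (m n) = a}" by (simp add: vimage_def)
  define \<phi> where "\<phi> = enumerate {n. hd (m n) = a}"
  define n0 where "n0 = \<phi> 0"
  have hd_\<phi>: "hd (m (\<phi> k)) = a" for k
    using enumerate_in_set[OF inf_S] unfolding \<phi>_def by auto
  have \<phi>_mono: "k < l \<Longrightarrow> \<phi> k < \<phi> l" for k l
    using enumerate_mono[OF _ inf_S] unfolding \<phi>_def by auto
  have n0_le: "n0 \<le> \<phi> k" for k
    unfolding n0_def using \<phi>_mono by (cases k) (auto simp: less_imp_le)
  define g where "g i = (if i < n0 then m i else tl (m (\<phi> (i - n0))))" for i
  have bad_g: "bad_seq A g"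
    unfolding bad_seq_def
  proof (intro allI impI conjI notI)
    show "set (g n) \<subseteq> A" for n
      using bad_m unfolding g_def bad_seq_def by (auto dest!: list.set_sel(2)[OF m_nonempty])
  next
    fix i j assume "i < j" and sub: "subseq (g i) (g j)"
    have m_cons: "m k = hd (m k) # tl (m k)" for k using m_nonempty by simp
    consider "j < n0" | "i < n0" "n0 \<le> j" | "n0 \<le> i" by linarith
    then show False
    proof cases
      case 1
      with \<open>i < j\<close> sub show False using bad_m unfolding g_def bad_seq_def by auto
    next
      case 2
      with sub have "subseq (m i) (tl (m (\<phi> (j - n0))))" unfolding g_def by simp
      then have "subseq (m i) (m (\<phi> (j - n0)))" by (subst m_cons) (rule list_emb_Cons)
      moreover have "i < \<phi> (j - n0)" using 2 n0_le[of "j - n0"] by simp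
      ultimately show False using bad_m unfolding bad_seq_def by blast
    next
      case 3
      with \<open>i < j\<close> sub have "subseq (tl (m (\<phi> (i - n0)))) (tl (m (\<phi> (j - n0))))"
        unfolding g_def by auto
      then have "subseq (hd (m (\<phi> (i - n0))) # tl (m (\<phi> (i - n0))))
          (hd (m (\<phi> (j - n0))) # tl (m (\<phi> (j - n0))))"
        using hd_\<phi> by simp
      then have "subseq (m (\<phi> (i - n0))) (m (\<phi> (j - n0)))" using m_cons by metis
      moreover have "\<phi> (i - n0) < \<phi> (j - n0)" using 3 \<open>i < j\<close> \<phi>_mono by simp
      ultimately show False using bad_m unfolding bad_seq_def by blast
    qed
  qed
  have "length (m n0) \<le> length (g n0)" using m_minimal[OF bad_g, of n0] unfolding g_def by auto
  moreover have "length (g n0) < length (m n0)" unfolding g_def n0_def using m_nonempty by simp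
  ultimately show False by simp
qed

lemma good_imp_chain_subseq:
  fixes f :: "nat \<Rightarrow> 'a"
  assumes good: "\<And>g :: nat \<Rightarrow> 'a. (\<And>n. g n \<in> T) \<Longrightarrow> \<exists>i j. i < j \<and> R (g i) (g j)"
    and "\<And>n. f n \<in> T"
  shows "\<exists>\<phi> :: nat \<Rightarrow> nat. strict_mono \<phi> \<and> (\<forall>i j. i < j \<longrightarrow> R (f (\<phi> i)) (f (\<phi> j)))"
proof -
  define colour where "colour X = (if R (f (Min X)) (f (Max X)) then 0 else (1::nat))" for X
  have "\<exists>Y t. Y \<subseteq> UNIV \<and> infinite Y \<and> t < 2 \<and> (\<forall>x\<in>Y. \<forall>y\<in>Y. x \<noteq> y \<longrightarrow> colour {x, y} = t)"
    by (rule Ramsey2) (auto simp: colour_def)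
  then obtain Y t where Y: "infinite Y" "\<forall>x\<in>Y. \<forall>y\<in>Y. x \<noteq> y \<longrightarrow> colour {x, y} = t"
    by blast
  define \<phi> where "\<phi> = enumerate Y"
  have mono: "strict_mono \<phi>" unfolding \<phi>_def strict_mono_def using Y(1) enumerate_mono by blast
  have R_iff: "R (f (\<phi> i)) (f (\<phi> j)) \<longleftrightarrow> t = 0" if "i < j" for i j
  proof -
    have lt: "\<phi> i < \<phi> j" using mono that by (simp add: strict_mono_less)
    moreover have "\<phi> i \<in> Y" "\<phi> j \<in> Y" unfolding \<phi>_def using Y(1) by (auto intro: enumerate_in_set)
    ultimately have "colour {\<phi> i, \<phi> j} = t" using Y(2) by auto
    then show ?thesis using lt by (auto simp: colour_def split: if_splits)
  qed
  obtain i j where "i < j" "R (f (\<phi> i)) (f (\<phi> j))" using good[of "f \<circ> \<phi>"] assms(2) by auto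
  then have "t = 0" using R_iff by blast
  then have "\<forall>i j. i < j \<longrightarrow> R (f (\<phi> i)) (f (\<phi> j))" using R_iff by blast
  with mono show ?thesis by blast
qed

lemma choice_sequence:
  assumes "\<And>L. set L \<subseteq> T \<Longrightarrow> \<exists>b\<in>T. P L b"
  shows "\<exists>s. (\<forall>n. s n \<in> T) \<and> (\<forall>n. P (map s [0..<n]) (s n))"
proof -
  define next_elem where "next_elem L = (SOME b. b \<in> T \<and> P L b)" for L
  have next_elem: "next_elem L \<in> T \<and> P L (next_elem L)" if "set L \<subseteq> T" for L
    using someI_ex[of "\<lambda>b. b \<in> T \<and> P L b"] assms[OF that] unfolding next_elem_def by blast
  define L where "L n = ((\<lambda>L. L @ [next_elem L]) ^^ n) []" for n
  define s where "s n = next_elem (L n)" for n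
  have L_Suc: "L (Suc n) = L n @ [s n]" for n
    by (simp add: L_def s_def)
  have L_map: "L n = map s [0..<n]" for n
    by (induction n) (simp_all add: L_Suc L_def[of 0])
  have L_sub: "set (L n) \<subseteq> T" for n
    by (induction n) (auto simp: L_def next_elem)
  have step: "s n \<in> T \<and> P (L n) (s n)" for n
    unfolding s_def by (rule next_elem[OF L_sub])
  show ?thesis
  proof (intro exI[of _ s] conjI allI)
    show "s n \<in> T" for n using step by blast
    show "P (map s [0..<n]) (s n)" for n using step[of n] by (simp only: L_map)
  qed
qed

section \<open>Left ideals\<close>

definition left_span :: "'k::ring_1 list \<Rightarrow> 'k set" where
  "left_span as = {a. \<exists>r. a = (\<Sum>l<length as. r l * as ! l)}"

lemma left_ideal_left_span: "left_ideal (left_span as)"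
proof -
  have scale: "c * x \<in> left_span as" if "x \<in> left_span as" for c x
  proof -
    from that obtain r where "x = (\<Sum>l<length as. r l * as ! l)" unfolding left_span_def by auto
    then have "c * x = (\<Sum>l<length as. (c * r l) * as ! l)" by (simp add: sum_distrib_left mult.assoc)
    then show ?thesis unfolding left_span_def by (intro CollectI exI[of _ "\<lambda>l. c * r l"])
  qed
  have add: "x + y \<in> left_span as" if "x \<in> left_span as" "y \<in> left_span as" for x y
  proof -
    from that obtain r s where "x = (\<Sum>l<length as. r l * as ! l)" "y = (\<Sum>l<length as. s l * as ! l)"
      unfolding left_span_def by auto
    then have "x + y = (\<Sum>l<length as. (r l + s l) * as ! l)" by (simp add: sum.distrib distrib_right)
    then show ?thesis unfolding left_span_def by (intro CollectI exI[of _ "\<lambda>l. r l + s l"])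
  qed
  have "0 \<in> left_span as" unfolding left_span_def by (intro CollectI exI[of _ "\<lambda>_. 0"]) simp
  moreover have "- x \<in> left_span as" if "x \<in> left_span as" for x
    using scale[OF that, of "- 1"] by simp
  ultimately show ?thesis using scale add unfolding left_ideal_def by blast
qed

lemma left_ideal_sum:
  assumes "left_ideal I" "\<And>a. a \<in> A \<Longrightarrow> f a \<in> I"
  shows "sum f A \<in> I"
  using assms(2)
proof (induction A rule: infinite_finite_induct)
  case (insert a A)
  then show ?case using assms(1) by (simp add: left_ideal_def)
qed (use assms(1) in \<open>simp_all add: left_ideal_def\<close>)

lemma left_span_least:
  assumes "left_ideal I" "set as \<subseteq> I"
  shows "left_span as \<subseteq> I"
proof
  fix a assume "a \<in> left_span as"
  then obtain r where "a = (\<Sum>l<length as. r l * as ! l)" unfolding left_span_def by auto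
  moreover have "r l * as ! l \<in> I" if "l < length as" for l
    using assms that unfolding left_ideal_def by (meson nth_mem subsetD)
  ultimately show "a \<in> I" by (auto intro: left_ideal_sum[OF assms(1)])
qed

lemma in_left_span: "a \<in> set as \<Longrightarrow> a \<in> left_span as"
proof -
  assume "a \<in> set as"
  then obtain k where k: "k < length as" "as ! k = a" by (auto simp: in_set_conv_nth)
  have "(\<Sum>l<length as. (if l = k then 1 else 0) * as ! l) = (\<Sum>l<length as. if l = k then as ! k else 0)"
    by (intro sum.cong) auto
  also have "\<dots> = as ! k" using k(1) by simp
  finally have "(\<Sum>l<length as. (if l = k then 1 else 0) * as ! l) = as ! k" .
  then show ?thesis unfolding left_span_def using k(2)
    by (intro CollectI exI[of _ "\<lambda>l. if l = k then 1 else 0"]) simp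
qed

lemma left_span_append: "left_span as \<subseteq> left_span (as @ bs)"
  by (rule left_span_least[OF left_ideal_left_span]) (auto intro: in_left_span)

lemma left_noetherian_chainE:
  assumes "left_noetherian TYPE('k::ring_1)"
    and "\<And>n. left_ideal (I n :: 'k set)" "\<And>n. I n \<subseteq> I (Suc n)"
  obtains N where "I (Suc N) = I N"
proof -
  obtain N where "\<forall>n\<ge>N. I n = I N"
    using assms(1)[unfolded left_noetherian_def, rule_format, of I] assms(2,3) by blast
  then have "I (Suc N) = I N" using le_SucI[OF order_refl] by blast
  then show thesis by (rule that)
qed

lemma left_ideal_finitely_generated:
  fixes I :: "'k::ring_1 set"
  assumes "left_noetherian TYPE('k)" and I: "left_ideal I"
  shows "\<exists>as. set as \<subseteq> I \<and> left_span as = I"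
proof (rule ccontr)
  assume "\<not> ?thesis"
  then have "\<exists>b\<in>I. b \<notin> left_span L" if "set L \<subseteq> I" for L
    using left_span_least[OF I that] that by blast
  then obtain s where s: "\<forall>n. s n \<in> I" "\<forall>n. s n \<notin> left_span (map s [0..<n])"
    using choice_sequence[of I "\<lambda>L b. b \<notin> left_span L"] by blast
  have "left_span (map s [0..<n]) \<subseteq> left_span (map s [0..<Suc n])" for n
    using left_span_append by simp
  then obtain N where "left_span (map s [0..<Suc N]) = left_span (map s [0..<N])"
    by (rule left_noetherian_chainE[OF assms(1) left_ideal_left_span])
  moreover have "s N \<in> left_span (map s [0..<Suc N])" by (simp add: in_left_span)
  ultimately show False using s(2) by simp
qed

lemma good_ideal_family_finite_basis:
  fixes I :: "'a \<Rightarrow> 'k::ring_1 set"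
  assumes noeth: "left_noetherian TYPE('k)"
    and good: "\<And>s :: nat \<Rightarrow> 'a. (\<And>n. s n \<in> T) \<Longrightarrow> \<exists>i j. i < j \<and> R (s i) (s j)"
    and ideal: "\<And>b. b \<in> T \<Longrightarrow> left_ideal (I b)"
    and mono: "\<And>b b'. b \<in> T \<Longrightarrow> R b b' \<Longrightarrow> I b \<subseteq> I b'"
  shows "\<exists>F. finite F \<and> F \<subseteq> T \<and> (\<forall>b\<in>T. \<exists>f\<in>F. R f b \<and> I b \<subseteq> I f)"
proof (rule ccontr)
  assume "\<not> ?thesis"
  then have "\<exists>b\<in>T. \<forall>f\<in>set L. \<not> (R f b \<and> I b \<subseteq> I f)" if "set L \<subseteq> T" for L
    using that by (meson List.finite_set)
  then obtain s where s: "\<And>n. s n \<in> T" "\<forall>n. \<forall>f\<in>set (map s [0..<n]). \<not> (R f (s n) \<and> I (s n) \<subseteq> I f)"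
    using choice_sequence[of T "\<lambda>L b. \<forall>f\<in>set L. \<not> (R f b \<and> I b \<subseteq> I f)"] by blast
  obtain \<phi> :: "nat \<Rightarrow> nat" where \<phi>: "strict_mono \<phi>" "\<forall>i j. i < j \<longrightarrow> R (s (\<phi> i)) (s (\<phi> j))"
    using good_imp_chain_subseq[of T R s] good s(1) by blast
  obtain N where N: "I (s (\<phi> (Suc N))) = I (s (\<phi> N))"
    using left_noetherian_chainE[OF noeth, of "\<lambda>n. I (s (\<phi> n))"] ideal mono s(1) \<phi>(2) by blast
  have "\<phi> N < \<phi> (Suc N)" using \<phi>(1) by (simp add: strict_mono_def)
  then have "s (\<phi> N) \<in> set (map s [0..<\<phi> (Suc N)])" by simp
  then have "\<not> (R (s (\<phi> N)) (s (\<phi> (Suc N))) \<and> I (s (\<phi> (Suc N))) \<subseteq> I (s (\<phi> N)))"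
    using s(2) by blast
  moreover have "R (s (\<phi> N)) (s (\<phi> (Suc N)))" using \<phi>(2) by simp
  ultimately show False using N by simp
qed

lemma symI_minus_iff [simp]: "- t \<in> symI n \<longleftrightarrow> t \<in> symI n"
  by (auto simp: symI_def)

lemma FSB_homD:
  assumes "\<phi> \<in> FSB_hom m n"
  shows "\<phi> ` symI m = symI n" "\<And>t. t \<in> symI m \<Longrightarrow> \<phi> (- t) = - \<phi> t" "\<phi> 0 = 0"
    "\<And>t. t \<in> symI m \<Longrightarrow> \<phi> t \<in> symI n" "\<And>t. t \<notin> symI m \<Longrightarrow> \<phi> t = undefined"
proof -
  show image: "\<phi> ` symI m = symI n" and odd: "\<And>t. t \<in> symI m \<Longrightarrow> \<phi> (- t) = - \<phi> t"
    using assms by (auto simp: FSB_hom_def)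
  show "\<phi> 0 = 0" using odd[of 0] by (simp add: symI_def)
  show "\<And>t. t \<in> symI m \<Longrightarrow> \<phi> t \<in> symI n" using image by blast
  show "\<And>t. t \<notin> symI m \<Longrightarrow> \<phi> t = undefined"
    using assms by (auto simp: FSB_hom_def PiE_def extensional_def)
qed

lemma FSB_hom_eqI:
  assumes "\<phi> \<in> FSB_hom m n" "\<phi>' \<in> FSB_hom m n" "\<And>t. t \<in> symI m \<Longrightarrow> \<phi> t = \<phi>' t"
  shows "\<phi> = \<phi>'"
  using assms FSB_homD(5)[OF assms(1)] FSB_homD(5)[OF assms(2)] by fastforce

lemma finite_FSB_hom: "finite (FSB_hom m n)"
proof -
  have "FSB_hom m n \<subseteq> symI m \<rightarrow>\<^sub>E symI n" by (auto simp: FSB_hom_def)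
  then show ?thesis by (rule finite_subset) (simp add: finite_PiE symI_def)
qed

lemma FSB_comp_apply: "t \<in> symI l \<Longrightarrow> FSB_comp l \<psi> \<phi> t = \<psi> (\<phi> t)"
  by (simp add: FSB_comp_def compose_def)

lemma FSB_comp_hom:
  assumes \<phi>: "\<phi> \<in> FSB_hom y x" and \<psi>: "\<psi> \<in> FSB_hom y' y"
  shows "FSB_comp y' \<phi> \<psi> \<in> FSB_hom y' x"
proof -
  have "FSB_comp y' \<phi> \<psi> ` symI y' = \<phi> ` \<psi> ` symI y'"
    by (auto simp: FSB_comp_apply)
  then have "FSB_comp y' \<phi> \<psi> ` symI y' = symI x"
    using FSB_homD(1)[OF \<phi>] FSB_homD(1)[OF \<psi>] by simp
  moreover have "FSB_comp y' \<phi> \<psi> \<in> symI y' \<rightarrow>\<^sub>E symI x"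
    using FSB_homD(4)[OF \<phi>] FSB_homD(4)[OF \<psi>] by (auto simp: FSB_comp_def compose_def)
  moreover have "FSB_comp y' \<phi> \<psi> (- t) = - FSB_comp y' \<phi> \<psi> t" if "t \<in> symI y'" for t
    using that FSB_homD(2,4)[OF \<psi>] FSB_homD(2)[OF \<phi>] by (simp add: FSB_comp_apply)
  ultimately show ?thesis by (simp add: FSB_hom_def)
qed

lemma FSB_comp_assoc:
  assumes "\<psi> \<in> FSB_hom y' y"
  shows "FSB_comp y' (FSB_comp y \<eta> \<phi>) \<psi> = FSB_comp y' \<eta> (FSB_comp y' \<phi> \<psi>)"
proof -
  have "\<psi> \<in> symI y' \<rightarrow> symI y" using FSB_homD(4)[OF assms] by auto
  then show ?thesis unfolding FSB_comp_def by (rule compose_assoc[symmetric])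
qed

lemma FSB_comp_cancel_right:
  assumes \<psi>: "\<psi> \<in> FSB_hom y' y" and "\<phi> \<in> FSB_hom y x" "\<phi>' \<in> FSB_hom y x"
    and eq: "FSB_comp y' \<phi> \<psi> = FSB_comp y' \<phi>' \<psi>"
  shows "\<phi> = \<phi>'"
proof (rule FSB_hom_eqI[OF assms(2,3)])
  fix t assume "t \<in> symI y"
  then obtain s where "s \<in> symI y'" "t = \<psi> s" using FSB_homD(1)[OF \<psi>] by blast
  then show "\<phi> t = \<phi>' t" using fun_cong[OF eq, of s] by (simp add: FSB_comp_apply)
qed

lemma FSB_hom_agree_abs_le:
  assumes \<phi>: "\<phi> \<in> FSB_hom y x" and \<phi>': "\<phi>' \<in> FSB_hom y x"
    and agree: "\<And>t. 1 \<le> t \<Longrightarrow> t \<le> k \<Longrightarrow> \<phi> t = \<phi>' t"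
    and t: "t \<in> symI y" "\<bar>t\<bar> \<le> k"
  shows "\<phi> t = \<phi>' t"
proof -
  consider "t = 0" | "t > 0" | "t < 0" by linarith
  then show ?thesis
  proof cases
    case 1
    then show ?thesis using FSB_homD(3)[OF \<phi>] FSB_homD(3)[OF \<phi>'] by simp
  next
    case 2
    then show ?thesis using agree t by (auto simp: symI_def)
  next
    case 3
    then have "\<phi> (- t) = \<phi>' (- t)" using agree t by (auto simp: symI_def)
    then show ?thesis using FSB_homD(2)[OF \<phi> t(1)] FSB_homD(2)[OF \<phi>' t(1)] by simp
  qed
qed

section \<open>The monomial order\<close>

definition monomial_key :: "nat \<Rightarrow> nat \<times> (int \<Rightarrow> int) \<Rightarrow> nat \<times> int list" where
  "monomial_key y b = (fst b, map (\<lambda>q. snd b (int (Suc q))) [0..<y])"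

lemma monomial_key_inj:
  assumes "b \<in> sumP_basis xs y" "b' \<in> sumP_basis xs y" "monomial_key y b = monomial_key y b'"
  shows "b = b'"
proof -
  obtain i w i' w' where b: "b = (i, w)" "b' = (i', w')" by (cases b, cases b')
  from assms(3) have i: "i' = i" and vals: "map (\<lambda>q. w (int (Suc q))) [0..<y] = map (\<lambda>q. w' (int (Suc q))) [0..<y]"
    by (auto simp: monomial_key_def b)
  have hom: "w \<in> FSB_hom y (xs ! i)" "w' \<in> FSB_hom y (xs ! i)"
    using assms(1,2) by (auto simp: sumP_basis_def b i)
  have "w t = w' t" if "1 \<le> t" "t \<le> int y" for t
    using that arg_cong[OF vals, of "\<lambda>l. l ! nat (t - 1)"] by (simp add: nat_less_iff)
  then have "w = w'"
    using FSB_hom_agree_abs_le[OF hom, of "int y"] by (intro FSB_hom_eqI[OF hom]) (auto simp: symI_def)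
  then show ?thesis using b i by simp
qed

lemma map_upt_less_iff:
  fixes f g :: "nat \<Rightarrow> 'a::linorder"
  shows "map f [0..<n] < map g [0..<n] \<longleftrightarrow> (\<exists>k<n. (\<forall>q<k. f q = g q) \<and> f k < g k)"
proof -
  have "map f [0..<n] < map g [0..<n] \<longleftrightarrow>
      (\<exists>k<n. take k (map f [0..<n]) = take k (map g [0..<n]) \<and> f k < g k)"
    by (auto simp: list_less_def lexord_take_index_conv)
  also have "\<dots> \<longleftrightarrow> (\<exists>k<n. (\<forall>q<k. f q = g q) \<and> f k < g k)"
    by (intro ex_cong1 conj_cong refl) (auto simp: take_map list_eq_iff_nth_eq min_def)
  finally show ?thesis .
qed

text \<open>\<psi> is ordered if, on [1,y'], the first position where |\<psi>| takes the value p carries +p,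
  and these first positions increase with p.  Precomposition with ordered surjections
  preserves the monomial order.\<close>

definition ordered_surj :: "nat \<Rightarrow> nat \<Rightarrow> (int \<Rightarrow> int) \<Rightarrow> bool" where
  "ordered_surj y' y \<psi> \<longleftrightarrow> \<psi> \<in> FSB_hom y' y \<and>
     (\<forall>p\<in>{1..int y}. \<exists>i0\<in>{1..int y'}. \<psi> i0 = p \<and> (\<forall>j\<in>{1..int y'}. j < i0 \<longrightarrow> \<bar>\<psi> j\<bar> < p))"

lemma monomial_key_comp_less:
  assumes \<psi>: "ordered_surj y' y \<psi>"
    and b: "(i, w) \<in> sumP_basis xs y" "(i', w') \<in> sumP_basis xs y"
    and less: "monomial_key y (i, w) < monomial_key y (i', w')"
  shows "monomial_key y' (i, FSB_comp y' w \<psi>) < monomial_key y' (i', FSB_comp y' w' \<psi>)"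
proof (cases "i = i'")
  case False
  then show ?thesis using less by (auto simp: monomial_key_def)
next
  case True
  then obtain k where k: "k < y" "\<forall>q<k. w (int (Suc q)) = w' (int (Suc q))"
    "w (int (Suc k)) < w' (int (Suc k))"
    using less by (auto simp: monomial_key_def map_upt_less_iff)
  have hom: "w \<in> FSB_hom y (xs ! i)" "w' \<in> FSB_hom y (xs ! i)"
    using b True by (auto simp: sumP_basis_def)
  have \<psi>_hom: "\<psi> \<in> FSB_hom y' y" using \<psi> by (simp add: ordered_surj_def)
  have "w t = w' t" if "1 \<le> t" "t \<le> int k" for t
  proof -
    have "nat (t - 1) < k" using that by linarith
    then have "w (int (Suc (nat (t - 1)))) = w' (int (Suc (nat (t - 1))))" using k(2) by blast
    moreover have "int (Suc (nat (t - 1))) = t" using that by simp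
    ultimately show ?thesis by simp
  qed
  note agree = FSB_hom_agree_abs_le[OF hom this]
  txt \<open>w and w' first differ at k + 1; \<psi> first reaches k + 1 at i0 and stays in [-k,k] before.\<close>
  obtain i0 where i0: "i0 \<in> {1..int y'}" "\<psi> i0 = int (Suc k)"
    "\<forall>j\<in>{1..int y'}. j < i0 \<longrightarrow> \<bar>\<psi> j\<bar> < int (Suc k)"
    using \<psi> k(1) unfolding ordered_surj_def by force
  define k' where "k' = nat (i0 - 1)"
  have "w (\<psi> (int (Suc q))) = w' (\<psi> (int (Suc q)))" if "q < k'" for q
  proof (rule agree)
    have q: "int (Suc q) \<in> {1..int y'}" "int (Suc q) < i0" using that i0(1) by (auto simp: k'_def)
    then show "\<psi> (int (Suc q)) \<in> symI y" using FSB_homD(4)[OF \<psi>_hom] by (auto simp: symI_def)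
    show "\<bar>\<psi> (int (Suc q))\<bar> \<le> int k" using i0(3) q by fastforce
  qed
  moreover have "w (\<psi> (int (Suc k'))) < w' (\<psi> (int (Suc k')))"
    using i0 k(3) by (simp add: k'_def)
  moreover have "k' < y'" "int (Suc q) \<in> symI y'" if "q \<le> k'" for q
    using i0(1) that by (auto simp: k'_def symI_def)
  ultimately show ?thesis using True
    by (auto simp: monomial_key_def map_upt_less_iff FSB_comp_apply intro!: exI[of _ k'])
qed

section \<open>Ordered factorisations from embeddings of words\<close>

lemma list_emb_index:
  assumes "list_emb P xs ys"
  shows "\<exists>\<iota>. (\<forall>p<length xs. \<iota> p < length ys \<and> P (xs ! p) (ys ! \<iota> p))
    \<and> (\<forall>p q. p < q \<longrightarrow> q < length xs \<longrightarrow> \<iota> p < \<iota> q)"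
  using assms
proof (induction rule: list_emb.induct)
  case (list_emb_Nil ys)
  then show ?case by auto
next
  case (list_emb_Cons xs ys y)
  then obtain \<iota> where "\<forall>p<length xs. \<iota> p < length ys \<and> P (xs ! p) (ys ! \<iota> p)"
    "\<forall>p q. p < q \<longrightarrow> q < length xs \<longrightarrow> \<iota> p < \<iota> q" by blast
  then show ?case by (intro exI[of _ "\<lambda>p. Suc (\<iota> p)"]) auto
next
  case (list_emb_Cons2 x y xs ys)
  then obtain \<iota> where \<iota>: "\<forall>p<length xs. \<iota> p < length ys \<and> P (xs ! p) (ys ! \<iota> p)"
    "\<forall>p q. p < q \<longrightarrow> q < length xs \<longrightarrow> \<iota> p < \<iota> q" by blast
  define \<kappa> where "\<kappa> p = (if p = 0 then 0 else Suc (\<iota> (p - 1)))" for p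
  have "\<forall>p<length (x # xs). \<kappa> p < length (y # ys) \<and> P ((x # xs) ! p) ((y # ys) ! \<kappa> p)"
    using \<iota>(1) list_emb_Cons2(1) by (auto simp: \<kappa>_def nth_Cons')
  moreover have "\<forall>p q. p < q \<longrightarrow> q < length (x # xs) \<longrightarrow> \<kappa> p < \<kappa> q"
    using \<iota>(2) by (auto simp: \<kappa>_def)
  ultimately show ?case by blast
qed

text \<open>Encoding of w : [-y,y] \<rightarrow> [-x,x] by a word over a finite alphabet.  By Higman's
  lemma some word embeds into a later one, and an embedding of words yields a factorisation
  through an ordered surjection.\<close>

definition surj_word :: "nat \<Rightarrow> nat \<Rightarrow> (int \<Rightarrow> int) \<Rightarrow> (nat \<times> int \<times> int set) list" where
  "surj_word y i w = map (\<lambda>q. (i, w (int q), w ` {0..<int q})) [0..<Suc y]"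

lemma length_surj_word [simp]: "length (surj_word y i w) = Suc y"
  by (simp add: surj_word_def)

lemma nth_surj_word: "p \<le> y \<Longrightarrow> surj_word y i w ! p = (i, w (int p), w ` {0..<int p})"
  by (simp add: surj_word_def nth_map less_Suc_eq_le del: upt_Suc)

lemma set_surj_word:
  assumes "w \<in> FSB_hom y x"
  shows "set (surj_word y i w) \<subseteq> {i} \<times> symI x \<times> Pow (symI x)"
proof -
  have "(i, w (int q), w ` {0..<int q}) \<in> {i} \<times> symI x \<times> Pow (symI x)" if "q \<le> y" for q
    using that FSB_homD(4)[OF assms] by (auto simp: symI_def)
  then show ?thesis unfolding surj_word_def set_map by (intro image_subsetI) (simp add: less_Suc_eq_le del: upt_Suc)
qed

lemma subseq_surj_word_index:
  assumes "subseq (surj_word n i f) (surj_word n' i' g)"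
  obtains \<iota> where "i = i'" "\<And>p q. p < q \<Longrightarrow> q \<le> n \<Longrightarrow> \<iota> p < \<iota> q" "\<And>p. p \<le> n \<Longrightarrow> \<iota> p \<le> n'"
    "\<And>p. p \<le> n \<Longrightarrow> f (int p) = g (int (\<iota> p)) \<and> f ` {0..<int p} = g ` {0..<int (\<iota> p)}"
proof -
  obtain \<iota> where \<iota>: "\<forall>p<Suc n. \<iota> p < Suc n' \<and> surj_word n i f ! p = surj_word n' i' g ! \<iota> p"
    "\<forall>p q. p < q \<longrightarrow> q < Suc n \<longrightarrow> \<iota> p < \<iota> q"
    using list_emb_index[OF assms] by auto
  have "\<iota> p \<le> n' \<and> i = i' \<and> f (int p) = g (int (\<iota> p)) \<and> f ` {0..<int p} = g ` {0..<int (\<iota> p)}"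
    if "p \<le> n" for p
  proof -
    have "p < Suc n" using that by simp
    then have "\<iota> p \<le> n'" "surj_word n i f ! p = surj_word n' i' g ! \<iota> p"
      using \<iota>(1) less_Suc_eq_le by blast+
    then show ?thesis using that by (simp add: nth_surj_word)
  qed
  then show ?thesis using that[of \<iota>] \<iota>(2) by auto
qed

definition odd_extension :: "nat \<Rightarrow> (nat \<Rightarrow> int) \<Rightarrow> int \<Rightarrow> int" where
  "odd_extension n h t = (if t \<in> symI n then sgn t * h (nat \<bar>t\<bar>) else undefined)"

lemma odd_extension_ordered_factor:
  assumes f: "f \<in> FSB_hom n x" and g: "g \<in> FSB_hom n' x"
    and lift: "\<And>j. j \<le> n' \<Longrightarrow> h j \<in> symI n \<and> f (h j) = g (int j)"
    and first: "\<And>p. 1 \<le> p \<Longrightarrow> p \<le> n \<Longrightarrow>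
      \<exists>j. 1 \<le> j \<and> j \<le> n' \<and> h j = int p \<and> (\<forall>j'. 1 \<le> j' \<longrightarrow> j' < j \<longrightarrow> \<bar>h j'\<bar> < int p)"
  shows "ordered_surj n' n (odd_extension n' h) \<and> g = FSB_comp n' f (odd_extension n' h)"
proof -
  let ?h = "odd_extension n' h"
  have pos: "?h (int j) = h j" "?h (- int j) = - h j" if "1 \<le> j" "j \<le> n'" for j
    using that by (auto simp: odd_extension_def symI_def)
  have val: "?h t \<in> symI n \<and> f (?h t) = g t" if t: "t \<in> symI n'" for t
  proof -
    consider "t = 0" | "t > 0" | "t < 0" by linarith
    then show ?thesis
    proof cases
      case 1
      then show ?thesis using FSB_homD(3)[OF f] FSB_homD(3)[OF g]
        by (simp add: odd_extension_def symI_def)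
    next
      case 2
      then show ?thesis using t lift[of "nat t"] pos(1)[of "nat t"] by (auto simp: symI_def)
    next
      case 3
      then have "h (nat (- t)) \<in> symI n" "f (h (nat (- t))) = g (- t)"
        using t lift[of "nat (- t)"] by (auto simp: symI_def)
      then show ?thesis using 3 t pos(2)[of "nat (- t)"] FSB_homD(2)[OF f] FSB_homD(2)[OF g t]
        by (auto simp: symI_def)
    qed
  qed
  have "symI n \<subseteq> ?h ` symI n'"
  proof
    fix s assume s: "s \<in> symI n"
    consider "s = 0" | "1 \<le> nat \<bar>s\<bar>" by linarith
    then show "s \<in> ?h ` symI n'"
    proof cases
      case 1
      then show ?thesis by (force simp: odd_extension_def symI_def)
    next
      case 2
      moreover have "nat \<bar>s\<bar> \<le> n" using s by (auto simp: symI_def)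
      ultimately obtain j where j: "1 \<le> j" "j \<le> n'" "h j = \<bar>s\<bar>"
        using first[of "nat \<bar>s\<bar>"] by auto
      then have "?h (sgn s * int j) = s"
        using pos[OF j(1,2)] \<open>1 \<le> nat \<bar>s\<bar>\<close> by (cases "s < 0") (auto simp: abs_if sgn_if)
      moreover have "sgn s * int j \<in> symI n'" using j by (auto simp: sgn_if symI_def)
      ultimately show ?thesis by (metis image_eqI)
    qed
  qed
  then have "?h ` symI n' = symI n" using val by blast
  moreover have "?h \<in> extensional (symI n')" by (simp add: odd_extension_def extensional_def)
  moreover have "?h (- t) = - ?h t" if "t \<in> symI n'" for t
    using that by (simp add: odd_extension_def sgn_minus)
  ultimately have hom: "?h \<in> FSB_hom n' n" using val by (auto simp: FSB_hom_def PiE_def)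
  have "ordered_surj n' n ?h"
    unfolding ordered_surj_def
  proof (intro conjI hom ballI)
    fix p assume "p \<in> {1..int n}"
    then have "1 \<le> nat p" "nat p \<le> n" "int (nat p) = p" by auto
    then obtain j where j: "1 \<le> j" "j \<le> n'" "h j = p" "\<forall>j'. 1 \<le> j' \<longrightarrow> j' < j \<longrightarrow> \<bar>h j'\<bar> < p"
      using first[of "nat p"] by metis
    show "\<exists>i0\<in>{1..int n'}. ?h i0 = p \<and> (\<forall>j'\<in>{1..int n'}. j' < i0 \<longrightarrow> \<bar>?h j'\<bar> < p)"
    proof (intro bexI[of _ "int j"] conjI ballI impI)
      fix j' assume "j' \<in> {1..int n'}" "j' < int j"
      then show "\<bar>?h j'\<bar> < p" using j(4)[rule_format, of "nat j'"] pos(1)[of "nat j'"] by auto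
    qed (use j pos in auto)
  qed
  moreover have "g = FSB_comp n' f ?h"
  proof
    fix t show "g t = FSB_comp n' f ?h t"
      using val[of t] FSB_homD(5)[OF g, of t] by (cases "t \<in> symI n'") (auto simp: FSB_comp_def compose_def)
  qed
  ultimately show ?thesis by blast
qed

lemma index_positive_lift:
  assumes f: "f \<in> FSB_hom n x" and g: "g \<in> FSB_hom n' x"
    and mono: "\<And>p q. p < q \<Longrightarrow> q \<le> n \<Longrightarrow> \<iota> p < \<iota> q" and le: "\<And>p. p \<le> n \<Longrightarrow> \<iota> p \<le> n'"
    and word: "\<And>p. p \<le> n \<Longrightarrow> f (int p) = g (int (\<iota> p)) \<and> f ` {0..<int p} = g ` {0..<int (\<iota> p)}"
  shows "\<exists>h. (\<forall>j\<le>n'. h j \<in> symI n \<and> f (h j) = g (int j)) \<and>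
    (\<forall>p. 1 \<le> p \<longrightarrow> p \<le> n \<longrightarrow>
      (\<exists>j. 1 \<le> j \<and> j \<le> n' \<and> h j = int p \<and> (\<forall>j'. 1 \<le> j' \<longrightarrow> j' < j \<longrightarrow> \<bar>h j'\<bar> < int p)))"
proof -
  have "g ` {0..<int (\<iota> 0)} = {}" using word[of 0] by simp
  then have \<iota>0: "\<iota> 0 = 0" by simp
  have mono_le: "\<iota> p \<le> \<iota> q \<longleftrightarrow> p \<le> q" if "p \<le> n" "q \<le> n" for p q
    using mono that by (metis le_less not_le)
  define P where "P j = Max {p. p \<le> n \<and> \<iota> p \<le> j}" for j
  have P_fin: "finite {p. p \<le> n \<and> \<iota> p \<le> j}" and P_ne: "0 \<in> {p. p \<le> n \<and> \<iota> p \<le> j}" for j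
    using \<iota>0 by auto
  have "P j \<in> {p. p \<le> n \<and> \<iota> p \<le> j}" for j
    unfolding P_def using P_ne by (intro Max_in[OF P_fin]) blast
  then have P: "P j \<le> n" "\<iota> (P j) \<le> j" for j by auto
  have P_max: "p \<le> P j" if "p \<le> n" "\<iota> p \<le> j" for p j
    using Max_ge[OF P_fin, of p j] that unfolding P_def by auto
  have P_\<iota>: "P (\<iota> p) = p" if "p \<le> n" for p
    using P_max[OF that order_refl] P[of "\<iota> p"] mono_le[of "P (\<iota> p)" p] that by simp
  have "\<exists>s. s \<in> symI n \<and> \<bar>s\<bar> \<le> int (P j) \<and> f s = g (int j) \<and> (\<iota> (P j) = j \<longrightarrow> s = int (P j))"
    if j: "j \<le> n'" for j
  proof (cases "\<iota> (P j) = j")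
    case True
    then show ?thesis using P(1) word[of "P j"] by (auto simp: symI_def)
  next
    case False
    have "\<exists>s. s \<in> symI n \<and> \<bar>s\<bar> \<le> int (P j) \<and> f s = g (int j)"
    proof (cases "P j < n")
      case True
      then have "\<not> \<iota> (Suc (P j)) \<le> j" using P_max[of "Suc (P j)" j] by auto
      then have "g (int j) \<in> f ` {0..<int (Suc (P j))}"
        using word[of "Suc (P j)"] True by auto
      then obtain s where "s \<in> {0..<int (Suc (P j))}" "g (int j) = f s" by (rule imageE)
      then show ?thesis using True by (intro exI[of _ s]) (auto simp: symI_def)
    next
      case False
      then have "P j = n" using P(1)[of j] by simp
      moreover have "g (int j) \<in> f ` symI n"
        using FSB_homD(1)[OF f] FSB_homD(4)[OF g] j by (auto simp: symI_def)
      then obtain s where "s \<in> symI n" "g (int j) = f s" by (rule imageE)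
      ultimately show ?thesis by (intro exI[of _ s]) (auto simp: symI_def)
    qed
    then show ?thesis using False by blast
  qed
  then obtain h where h: "\<And>j. j \<le> n' \<Longrightarrow> h j \<in> symI n \<and> \<bar>h j\<bar> \<le> int (P j) \<and> f (h j) = g (int j)
      \<and> (\<iota> (P j) = j \<longrightarrow> h j = int (P j))"
    by metis
  have "\<exists>j. 1 \<le> j \<and> j \<le> n' \<and> h j = int p \<and> (\<forall>j'. 1 \<le> j' \<longrightarrow> j' < j \<longrightarrow> \<bar>h j'\<bar> < int p)"
    if p: "1 \<le> p" "p \<le> n" for p
  proof (intro exI conjI allI impI)
    show "1 \<le> \<iota> p" using mono[of 0 p] p \<iota>0 by simp
    show "\<iota> p \<le> n'" "h (\<iota> p) = int p" using le[of p] h[of "\<iota> p"] P_\<iota>[of p] p by auto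
    fix j' assume j': "1 \<le> j'" "j' < \<iota> p"
    have "P j' < p"
    proof (rule ccontr)
      assume "\<not> P j' < p"
      then have "\<iota> p \<le> \<iota> (P j')" using mono_le P(1) p(2) by simp
      then show False using P(2)[of j'] j' by simp
    qed
    then show "\<bar>h j'\<bar> < int p" using h[of j'] j' \<open>\<iota> p \<le> n'\<close> by force
  qed
  then show ?thesis using h by blast
qed

lemma subseq_surj_word_ordered_factor:
  assumes f: "f \<in> FSB_hom n x" and g: "g \<in> FSB_hom n' x"
    and "subseq (surj_word n i f) (surj_word n' i' g)"
  shows "i = i' \<and> (\<exists>h. ordered_surj n' n h \<and> g = FSB_comp n' f h)"
proof -
  obtain \<iota> where "i = i'" and \<iota>: "\<And>p q. p < q \<Longrightarrow> q \<le> n \<Longrightarrow> \<iota> p < \<iota> q"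
    "\<And>p. p \<le> n \<Longrightarrow> \<iota> p \<le> n'"
    "\<And>p. p \<le> n \<Longrightarrow> f (int p) = g (int (\<iota> p)) \<and> f ` {0..<int p} = g ` {0..<int (\<iota> p)}"
    using subseq_surj_word_index[OF assms(3)] by metis
  obtain h where "\<forall>j\<le>n'. h j \<in> symI n \<and> f (h j) = g (int j)"
    "\<forall>p. 1 \<le> p \<longrightarrow> p \<le> n \<longrightarrow>
      (\<exists>j. 1 \<le> j \<and> j \<le> n' \<and> h j = int p \<and> (\<forall>j'. 1 \<le> j' \<longrightarrow> j' < j \<longrightarrow> \<bar>h j'\<bar> < int p))"
    using index_positive_lift[OF f g \<iota>] by blast
  then have "ordered_surj n' n (odd_extension n' h) \<and> g = FSB_comp n' f (odd_extension n' h)"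
    by (intro odd_extension_ordered_factor[OF f g]) auto
  with \<open>i = i'\<close> show ?thesis by blast
qed

section \<open>Divisibility of monomials is a well-quasi-order\<close>

text \<open>A monomial (y, i, w) stands for the basis element (i, w) of (\<Oplus>P_xs)(y).\<close>

definition monomials :: "nat list \<Rightarrow> (nat \<times> nat \<times> (int \<Rightarrow> int)) set" where
  "monomials xs = {(y, i, w). i < length xs \<and> w \<in> FSB_hom y (xs ! i)}"

fun monomial_dvd :: "nat \<times> nat \<times> (int \<Rightarrow> int) \<Rightarrow> nat \<times> nat \<times> (int \<Rightarrow> int) \<Rightarrow> bool" where
  "monomial_dvd (y, i, w) (y', i', w') \<longleftrightarrow> i = i' \<and> (\<exists>\<psi>. ordered_surj y' y \<psi> \<and> w' = FSB_comp y' w \<psi>)"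

lemma monomial_dvd_good:
  fixes s :: "nat \<Rightarrow> nat \<times> nat \<times> (int \<Rightarrow> int)"
  assumes "\<And>n. s n \<in> monomials xs"
  shows "\<exists>i j. i < j \<and> monomial_dvd (s i) (s j)"
proof -
  define X where "X = Max (insert 0 (set xs))"
  have "symI (xs ! i) \<subseteq> symI X" if "i < length xs" for i
    using that unfolding X_def by (auto simp: symI_def intro!: order.trans[OF _ of_nat_mono[OF Max_ge]])
  then have words: "set (surj_word y i w) \<subseteq> {..<length xs} \<times> symI X \<times> Pow (symI X)"
    if "(y, i, w) \<in> monomials xs" for y i w
    using that set_surj_word[of w y "xs ! i" i] by (fastforce simp: monomials_def)
  define W where "W n = (case s n of (y, i, w) \<Rightarrow> surj_word y i w)" for n
  have "set (W n) \<subseteq> {..<length xs} \<times> symI X \<times> Pow (symI X)" for n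
  proof -
    obtain y i w where "s n = (y, i, w)" by (metis prod_cases3)
    then show ?thesis using words assms[of n] by (simp add: W_def)
  qed
  then obtain i j where "i < j" and emb: "subseq (W i) (W j)"
    using higman[of "{..<length xs} \<times> symI X \<times> Pow (symI X)" W] by (auto simp: symI_def)
  obtain y a w y' a' w' where s: "s i = (y, a, w)" "s j = (y', a', w')" by (metis prod_cases3)
  have emb': "subseq (surj_word y a w) (surj_word y' a' w')" using emb by (simp add: W_def s)
  then have "a = a'" by (rule subseq_surj_word_index)
  moreover have "w \<in> FSB_hom y (xs ! a)" "w' \<in> FSB_hom y' (xs ! a)"
    using assms[of i] assms[of j] s \<open>a = a'\<close> by (auto simp: monomials_def)
  ultimately have "monomial_dvd (s i) (s j)"
    using subseq_surj_word_ordered_factor[OF _ _ emb'] by (auto simp: s)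
  then show ?thesis using \<open>i < j\<close> by blast
qed

section \<open>The free modules \<Oplus>P_xs\<close>

lemma finite_sumP_basis: "finite (sumP_basis xs y)"
proof -
  have "sumP_basis xs y \<subseteq> (\<Union>i<length xs. {i} \<times> FSB_hom y (xs ! i))"
    by (auto simp: sumP_basis_def)
  then show ?thesis by (rule finite_subset) (auto intro: finite_FSB_hom)
qed

lemma sumP_zero: "(\<lambda>_. 0) \<in> sumP xs y"
  by (simp add: sumP_def)

lemma sumP_add: "c \<in> sumP xs y \<Longrightarrow> d \<in> sumP xs y \<Longrightarrow> (\<lambda>p. c p + d p) \<in> sumP xs y"
  by (simp add: sumP_def)

lemma sumP_scale: "c \<in> sumP xs y \<Longrightarrow> (\<lambda>p. a * c p) \<in> sumP xs y"
  by (simp add: sumP_def)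

lemma sumP_outside: "c \<in> sumP xs y \<Longrightarrow> p \<notin> sumP_basis xs y \<Longrightarrow> c p = 0"
  unfolding sumP_def by blast

lemma sumP_act_in_sumP: "sumP_act xs y' y \<psi> c \<in> sumP xs y'"
  by (auto simp: sumP_def sumP_act_def)

lemma sumP_act_apply: "(i, \<chi>) \<in> sumP_basis xs y' \<Longrightarrow>
    sumP_act xs y' y \<psi> c (i, \<chi>) = (\<Sum>\<phi>\<in>{\<phi> \<in> FSB_hom y (xs ! i). FSB_comp y' \<phi> \<psi> = \<chi>}. c (i, \<phi>))"
  by (simp add: sumP_act_def)

lemma sumP_act_outside: "p \<notin> sumP_basis xs y' \<Longrightarrow> sumP_act xs y' y \<psi> c p = 0"
  by (auto simp: sumP_act_def split: prod.splits)

lemma sumP_act_sum: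
  assumes "finite A"
  shows "sumP_act xs y' y \<psi> (\<lambda>p. \<Sum>q\<in>A. c q * h q p) = (\<lambda>p. \<Sum>q\<in>A. c q * sumP_act xs y' y \<psi> (h q) p)"
proof
  fix p :: "nat \<times> (int \<Rightarrow> int)"
  obtain i \<chi> where p: "p = (i, \<chi>)" by (cases p)
  show "sumP_act xs y' y \<psi> (\<lambda>p. \<Sum>q\<in>A. c q * h q p) p = (\<Sum>q\<in>A. c q * sumP_act xs y' y \<psi> (h q) p)"
  proof (cases "p \<in> sumP_basis xs y'")
    case True
    then show ?thesis unfolding p
      by (simp add: sumP_act_apply[OF True[unfolded p]] sum_distrib_left) (rule sum.swap)
  qed (simp add: sumP_act_outside)
qed

lemma sumP_act_eq_sum_fibre:
  assumes "q' \<in> sumP_basis xs y'"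
  shows "sumP_act xs y' y \<psi> c q' = (\<Sum>q\<in>{q \<in> sumP_basis xs y. (fst q, FSB_comp y' (snd q) \<psi>) = q'}. c q)"
proof -
  obtain j \<chi> where q': "q' = (j, \<chi>)" by (cases q')
  have j: "j < length xs" using assms q' by (simp add: sumP_basis_def)
  have "sumP_act xs y' y \<psi> c q' = (\<Sum>\<phi>\<in>{\<phi> \<in> FSB_hom y (xs ! j). FSB_comp y' \<phi> \<psi> = \<chi>}. c (j, \<phi>))"
    using assms q' sumP_act_apply by simp
  also have "\<dots> = (\<Sum>q\<in>Pair j ` {\<phi> \<in> FSB_hom y (xs ! j). FSB_comp y' \<phi> \<psi> = \<chi>}. c q)"
    by (subst sum.reindex) (auto simp: inj_on_def)
  also have "Pair j ` {\<phi> \<in> FSB_hom y (xs ! j). FSB_comp y' \<phi> \<psi> = \<chi>}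
      = {q \<in> sumP_basis xs y. (fst q, FSB_comp y' (snd q) \<psi>) = q'}"
    using j by (auto simp: sumP_basis_def q')
  finally show ?thesis .
qed

lemma sumP_act_comp:
  assumes \<psi>: "\<psi> \<in> FSB_hom y' y" and \<phi>: "\<phi> \<in> FSB_hom y z"
  shows "sumP_act xs y' y \<psi> (sumP_act xs y z \<phi> g) = sumP_act xs y' z (FSB_comp y' \<phi> \<psi>) g"
proof
  fix p :: "nat \<times> (int \<Rightarrow> int)"
  obtain i \<chi> where p: "p = (i, \<chi>)" by (cases p)
  show "sumP_act xs y' y \<psi> (sumP_act xs y z \<phi> g) p = sumP_act xs y' z (FSB_comp y' \<phi> \<psi>) g p"
  proof (cases "p \<in> sumP_basis xs y'")
    case False
    then show ?thesis by (simp add: sumP_act_outside)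
  next
    case True
    hence i: "i < length xs" by (simp add: p sumP_basis_def)
    define T where "T = {\<theta> \<in> FSB_hom y (xs ! i). FSB_comp y' \<theta> \<psi> = \<chi>}"
    define V where "V = {\<eta> \<in> FSB_hom z (xs ! i). FSB_comp y' \<eta> (FSB_comp y' \<phi> \<psi>) = \<chi>}"
    have inB: "(i, \<theta>) \<in> sumP_basis xs y" if "\<theta> \<in> T" for \<theta> using that i by (simp add: T_def sumP_basis_def)
    have "sumP_act xs y' y \<psi> (sumP_act xs y z \<phi> g) p = (\<Sum>\<theta>\<in>T. sumP_act xs y z \<phi> g (i, \<theta>))"
      using True by (simp add: p sumP_act_apply T_def)
    also have "\<dots> = (\<Sum>\<theta>\<in>T. \<Sum>\<eta>\<in>{\<eta> \<in> FSB_hom z (xs ! i). FSB_comp y \<eta> \<phi> = \<theta>}. g (i, \<eta>))"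
      by (rule sum.cong) (auto simp: sumP_act_apply inB)
    also have "\<dots> = (\<Sum>\<theta>\<in>T. \<Sum>\<eta>\<in>{\<eta> \<in> V. FSB_comp y \<eta> \<phi> = \<theta>}. g (i, \<eta>))"
    proof (rule sum.cong[OF refl], rule sum.cong)
      fix \<theta> assume "\<theta> \<in> T"
      thus "{\<eta> \<in> FSB_hom z (xs ! i). FSB_comp y \<eta> \<phi> = \<theta>} = {\<eta> \<in> V. FSB_comp y \<eta> \<phi> = \<theta>}"
        using FSB_comp_assoc[OF \<psi>] by (auto simp: T_def V_def)
    qed simp
    also have "\<dots> = (\<Sum>\<eta>\<in>V. g (i, \<eta>))"
    proof (rule sum.group)
      show "finite V" unfolding V_def using finite_FSB_hom by simp
      show "finite T" unfolding T_def using finite_FSB_hom by simp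
      show "(\<lambda>\<eta>. FSB_comp y \<eta> \<phi>) ` V \<subseteq> T"
        using FSB_comp_hom[OF _ \<phi>] FSB_comp_assoc[OF \<psi>] by (auto simp: T_def V_def)
    qed
    also have "\<dots> = sumP_act xs y' z (FSB_comp y' \<phi> \<psi>) g p"
      using True by (simp add: p sumP_act_apply V_def)
    finally show ?thesis .
  qed
qed

definition vanishes_above ::
  "nat list \<Rightarrow> nat \<Rightarrow> nat \<times> (int \<Rightarrow> int) \<Rightarrow> (nat \<times> (int \<Rightarrow> int) \<Rightarrow> 'k::ring_1) \<Rightarrow> bool" where
  "vanishes_above xs y b c \<longleftrightarrow>
     (\<forall>b'\<in>sumP_basis xs y. monomial_key y b < monomial_key y b' \<longrightarrow> c b' = 0)"

lemma exists_leading_monomial: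
  assumes "c \<in> sumP xs y" "c \<noteq> (\<lambda>_. 0)"
  shows "\<exists>b\<in>sumP_basis xs y. c b \<noteq> 0 \<and> vanishes_above xs y b c"
proof -
  define S where "S = {b \<in> sumP_basis xs y. c b \<noteq> 0}"
  have "finite S" unfolding S_def using finite_sumP_basis by simp
  moreover have "S \<noteq> {}" using assms sumP_outside unfolding S_def by fastforce
  ultimately have "Max (monomial_key y ` S) \<in> monomial_key y ` S" by (intro Max_in) auto
  then obtain b where "b \<in> S" "monomial_key y b = Max (monomial_key y ` S)" by (metis imageE)
  moreover have "monomial_key y b' \<le> Max (monomial_key y ` S)" if "b' \<in> S" for b'
    using \<open>finite S\<close> that by simp
  ultimately show ?thesis unfolding S_def vanishes_above_def by (fastforce simp: not_less[symmetric])
qed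

lemma sumP_act_leading_coeff:
  assumes \<psi>: "\<psi> \<in> FSB_hom y' y" and b: "(i, w) \<in> sumP_basis xs y"
  shows "sumP_act xs y' y \<psi> c (i, FSB_comp y' w \<psi>) = c (i, w)"
proof -
  have w: "w \<in> FSB_hom y (xs ! i)" and i: "i < length xs" using b by (auto simp: sumP_basis_def)
  have "(i, FSB_comp y' w \<psi>) \<in> sumP_basis xs y'" using FSB_comp_hom[OF w \<psi>] i by (simp add: sumP_basis_def)
  moreover have "{\<phi> \<in> FSB_hom y (xs ! i). FSB_comp y' \<phi> \<psi> = FSB_comp y' w \<psi>} = {w}"
    using FSB_comp_cancel_right[OF \<psi> _ w] w by auto
  ultimately show ?thesis by (simp add: sumP_act_apply)
qed

lemma sumP_act_vanishes_above:
  assumes \<psi>: "ordered_surj y' y \<psi>" and b: "(i, w) \<in> sumP_basis xs y"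
    and vanish: "vanishes_above xs y (i, w) c"
  shows "vanishes_above xs y' (i, FSB_comp y' w \<psi>) (sumP_act xs y' y \<psi> c)"
  unfolding vanishes_above_def
proof (intro ballI impI)
  fix b' assume b': "b' \<in> sumP_basis xs y'"
    and above: "monomial_key y' (i, FSB_comp y' w \<psi>) < monomial_key y' b'"
  obtain i' \<chi> where b'_eq: "b' = (i', \<chi>)" by (cases b')
  have "c (i', \<phi>) = 0" if \<phi>: "\<phi> \<in> FSB_hom y (xs ! i')" "FSB_comp y' \<phi> \<psi> = \<chi>" for \<phi>
  proof -
    have b2: "(i', \<phi>) \<in> sumP_basis xs y" using \<phi> b' b'_eq by (simp add: sumP_basis_def)
    consider "monomial_key y (i, w) < monomial_key y (i', \<phi>)"
      | "monomial_key y (i, w) = monomial_key y (i', \<phi>)"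
      | "monomial_key y (i', \<phi>) < monomial_key y (i, w)"
      by fastforce
    then show ?thesis
    proof cases
      case 1
      then show ?thesis using vanish b2 by (simp add: vanishes_above_def)
    next
      case 2
      then have "(i, w) = (i', \<phi>)" using monomial_key_inj[OF b b2] by simp
      then show ?thesis using above \<phi>(2) b'_eq by simp
    next
      case 3
      then have "monomial_key y' (i', FSB_comp y' \<phi> \<psi>) < monomial_key y' (i, FSB_comp y' w \<psi>)"
        by (rule monomial_key_comp_less[OF \<psi> b2 b])
      then show ?thesis using above \<phi>(2) b'_eq by simp
    qed
  qed
  then show "sumP_act xs y' y \<psi> c b' = 0" using b' by (simp add: b'_eq sumP_act_apply)
qed

text \<open>For generators g_j \<in> (\<Oplus>P_xs)(y_j), the morphism \<Oplus>_j P_(y_j) \<rightarrow> \<Oplus>P_xs sending the basis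
  element (j, \<phi>) to \<phi>^*(g_j).\<close>

definition sumP_lift ::
  "nat list \<Rightarrow> (nat \<times> (nat \<times> (int \<Rightarrow> int) \<Rightarrow> 'k::ring_1)) list \<Rightarrow> nat
    \<Rightarrow> (nat \<times> (int \<Rightarrow> int) \<Rightarrow> 'k) \<Rightarrow> nat \<times> (int \<Rightarrow> int) \<Rightarrow> 'k" where
  "sumP_lift xs gens y c = (\<lambda>p. \<Sum>q\<in>sumP_basis (map fst gens) y.
      c q * sumP_act xs y (fst (gens ! fst q)) (snd q) (snd (gens ! fst q)) p)"

lemma sumP_lift_in_sumP: "sumP_lift xs gens y c \<in> sumP xs y"
  by (simp add: sumP_def sumP_lift_def sumP_act_outside)

lemma sumP_lift_add:
  "sumP_lift xs gens y (\<lambda>q. c q + d q) = (\<lambda>p. sumP_lift xs gens y c p + sumP_lift xs gens y d p)"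
  by (simp add: sumP_lift_def distrib_right sum.distrib)

lemma sumP_lift_scale: "sumP_lift xs gens y (\<lambda>q. a * c q) = (\<lambda>p. a * sumP_lift xs gens y c p)"
  by (simp add: sumP_lift_def sum_distrib_left mult.assoc)

lemma sumP_lift_zero: "sumP_lift xs gens y (\<lambda>_. 0) = (\<lambda>_. 0)"
  by (simp add: sumP_lift_def)

lemma sumP_lift_basis:
  assumes "(j, \<phi>) \<in> sumP_basis (map fst gens) y"
  shows "sumP_lift xs gens y (\<lambda>q. if q = (j, \<phi>) then 1 else 0)
    = sumP_act xs y (fst (gens ! j)) \<phi> (snd (gens ! j))"
proof
  fix p
  have "sumP_lift xs gens y (\<lambda>q. if q = (j, \<phi>) then 1 else 0) p =
    (\<Sum>q\<in>sumP_basis (map fst gens) y.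
      if q = (j, \<phi>) then sumP_act xs y (fst (gens ! fst q)) (snd q) (snd (gens ! fst q)) p else 0)"
    unfolding sumP_lift_def by (intro sum.cong) auto
  also have "\<dots> = sumP_act xs y (fst (gens ! j)) \<phi> (snd (gens ! j)) p"
    using assms finite_sumP_basis by (simp add: sum.delta')
  finally show "sumP_lift xs gens y (\<lambda>q. if q = (j, \<phi>) then 1 else 0) p
    = sumP_act xs y (fst (gens ! j)) \<phi> (snd (gens ! j)) p" .
qed

lemma sumP_lift_natural:
  assumes \<psi>: "\<psi> \<in> FSB_hom y' y"
  shows "sumP_lift xs gens y' (sumP_act (map fst gens) y' y \<psi> c)
    = sumP_act xs y' y \<psi> (sumP_lift xs gens y c)"
proof
  fix p
  define ys where "ys = map fst gens"
  define gen_image where "gen_image q' = sumP_act xs y' (fst (gens ! fst q')) (snd q') (snd (gens ! fst q')) p" for q'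
  define m where "m q = (fst q, FSB_comp y' (snd q) \<psi>)" for q :: "nat \<times> (int \<Rightarrow> int)"
  have m: "m q \<in> sumP_basis ys y'" if "q \<in> sumP_basis ys y" for q
    using that FSB_comp_hom[OF _ \<psi>] by (auto simp: m_def sumP_basis_def)
  have "sumP_lift xs gens y' (sumP_act ys y' y \<psi> c) p
      = (\<Sum>q'\<in>sumP_basis ys y'. sumP_act ys y' y \<psi> c q' * gen_image q')"
    by (simp add: sumP_lift_def gen_image_def ys_def)
  also have "\<dots> = (\<Sum>q'\<in>sumP_basis ys y'. \<Sum>q\<in>{q \<in> sumP_basis ys y. m q = q'}. c q * gen_image (m q))"
    by (intro sum.cong refl) (simp add: sumP_act_eq_sum_fibre sum_distrib_right m_def)
  also have "\<dots> = (\<Sum>q\<in>sumP_basis ys y. c q * gen_image (m q))"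
    by (rule sum.group) (auto simp: finite_sumP_basis m)
  also have "\<dots> = (\<Sum>q\<in>sumP_basis ys y.
      c q * sumP_act xs y' y \<psi> (sumP_act xs y (fst (gens ! fst q)) (snd q) (snd (gens ! fst q))) p)"
  proof (rule sum.cong[OF refl])
    fix q assume "q \<in> sumP_basis ys y"
    then have "snd q \<in> FSB_hom y (fst (gens ! fst q))" by (auto simp: sumP_basis_def ys_def)
    then show "c q * gen_image (m q)
        = c q * sumP_act xs y' y \<psi> (sumP_act xs y (fst (gens ! fst q)) (snd q) (snd (gens ! fst q))) p"
      by (simp add: gen_image_def m_def sumP_act_comp[OF \<psi>])
  qed
  also have "\<dots> = sumP_act xs y' y \<psi> (sumP_lift xs gens y c) p"
    unfolding sumP_lift_def ys_def by (simp add: sumP_act_sum[OF finite_sumP_basis])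
  finally show "sumP_lift xs gens y' (sumP_act (map fst gens) y' y \<psi> c) p
      = sumP_act xs y' y \<psi> (sumP_lift xs gens y c) p"
    by (simp add: ys_def)
qed

section \<open>Groebner bases of submodules of \<Oplus>P_xs\<close>

definition gens_lead_coeffs ::
  "nat list \<Rightarrow> (nat \<times> (nat \<times> (int \<Rightarrow> int) \<Rightarrow> 'k::ring_1)) list \<Rightarrow> nat \<times> nat \<times> (int \<Rightarrow> int) \<Rightarrow> 'k set" where
  "gens_lead_coeffs xs gens f =
     {c (snd f) | c. (fst f, c) \<in> set gens \<and> vanishes_above xs (fst f) (snd f) c}"

definition image_lead_coeffs ::
  "nat list \<Rightarrow> (nat \<times> (nat \<times> (int \<Rightarrow> int) \<Rightarrow> 'k::ring_1)) list \<Rightarrow> nat \<Rightarrow> nat \<times> (int \<Rightarrow> int) \<Rightarrow> 'k set" where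
  "image_lead_coeffs xs gens y b =
     {sumP_lift xs gens y e b | e. e \<in> sumP (map fst gens) y \<and> vanishes_above xs y b (sumP_lift xs gens y e)}"

lemma left_ideal_image_lead_coeffs: "left_ideal (image_lead_coeffs xs gens y b)"
proof -
  let ?lift = "sumP_lift xs gens y"
  have scale: "r * a \<in> image_lead_coeffs xs gens y b" if "a \<in> image_lead_coeffs xs gens y b" for r a
  proof -
    from that obtain e where "e \<in> sumP (map fst gens) y" "vanishes_above xs y b (?lift e)" "a = ?lift e b"
      unfolding image_lead_coeffs_def by blast
    then show ?thesis unfolding image_lead_coeffs_def
      by (intro CollectI exI[of _ "\<lambda>q. r * e q"]) (auto simp: sumP_lift_scale vanishes_above_def sumP_scale)
  qed
  have add: "a + a' \<in> image_lead_coeffs xs gens y b"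
    if "a \<in> image_lead_coeffs xs gens y b" "a' \<in> image_lead_coeffs xs gens y b" for a a'
  proof -
    from that obtain e e' where "e \<in> sumP (map fst gens) y" "vanishes_above xs y b (?lift e)" "a = ?lift e b"
      "e' \<in> sumP (map fst gens) y" "vanishes_above xs y b (?lift e')" "a' = ?lift e' b"
      unfolding image_lead_coeffs_def by blast
    then show ?thesis unfolding image_lead_coeffs_def
      by (intro CollectI exI[of _ "\<lambda>q. e q + e' q"]) (auto simp: sumP_lift_add vanishes_above_def sumP_add)
  qed
  have "0 \<in> image_lead_coeffs xs gens y b"
    unfolding image_lead_coeffs_def
    by (intro CollectI exI[of _ "\<lambda>_. 0"]) (auto simp: sumP_lift_zero vanishes_above_def sumP_zero)
  moreover have "- a \<in> image_lead_coeffs xs gens y b" if "a \<in> image_lead_coeffs xs gens y b" for a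
    using scale[OF that, of "- 1"] by simp
  ultimately show ?thesis using scale add unfolding left_ideal_def by blast
qed

lemma gens_lead_coeffs_subset_image_lead_coeffs:
  fixes gens :: "(nat \<times> (nat \<times> (int \<Rightarrow> int) \<Rightarrow> 'k::ring_1)) list"
  assumes f: "(yf, i, w) \<in> monomials xs" and \<psi>: "ordered_surj y yf \<psi>"
  shows "gens_lead_coeffs xs gens (yf, i, w) \<subseteq> image_lead_coeffs xs gens y (i, FSB_comp y w \<psi>)"
proof
  fix a assume "a \<in> gens_lead_coeffs xs gens (yf, i, w)"
  then obtain c where c: "(yf, c) \<in> set gens" "vanishes_above xs yf (i, w) c" "c (i, w) = a"
    unfolding gens_lead_coeffs_def by auto
  then obtain j where j: "j < length gens" "gens ! j = (yf, c)" by (auto simp: in_set_conv_nth)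
  have \<psi>_hom: "\<psi> \<in> FSB_hom y yf" using \<psi> by (simp add: ordered_surj_def)
  have jb: "(j, \<psi>) \<in> sumP_basis (map fst gens) y" using j \<psi>_hom by (simp add: sumP_basis_def)
  have b: "(i, w) \<in> sumP_basis xs yf" using f by (simp add: monomials_def sumP_basis_def)
  define e where "e = (\<lambda>q. if q = (j, \<psi>) then 1 else (0::'k))"
  have "e \<in> sumP (map fst gens) y" using jb by (auto simp: e_def sumP_def)
  moreover have "sumP_lift xs gens y e = sumP_act xs y yf \<psi> c"
    unfolding e_def using sumP_lift_basis[OF jb] j by simp
  moreover have "vanishes_above xs y (i, FSB_comp y w \<psi>) (sumP_act xs y yf \<psi> c)"
    by (rule sumP_act_vanishes_above[OF \<psi> b c(2)])
  moreover have "a = sumP_act xs y yf \<psi> c (i, FSB_comp y w \<psi>)"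
    using sumP_act_leading_coeff[OF \<psi>_hom b, where c = c] c(3) by simp
  ultimately show "a \<in> image_lead_coeffs xs gens y (i, FSB_comp y w \<psi>)"
    unfolding image_lead_coeffs_def by (intro CollectI exI[of _ e]) simp
qed

definition lower_support :: "nat list \<Rightarrow> nat \<Rightarrow> (nat \<times> (int \<Rightarrow> int) \<Rightarrow> 'k::ring_1) \<Rightarrow> (nat \<times> (int \<Rightarrow> int)) set" where
  "lower_support xs y c =
     {b \<in> sumP_basis xs y. \<exists>b'\<in>sumP_basis xs y. c b' \<noteq> 0 \<and> monomial_key y b \<le> monomial_key y b'}"

lemma lower_support_cancel_leading:
  assumes b: "b \<in> sumP_basis xs y" "c b \<noteq> 0"
    and vanish: "vanishes_above xs y b c" "vanishes_above xs y b e" and "e b = c b"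
  shows "lower_support xs y (\<lambda>p. c p + (- 1) * e p) \<subset> lower_support xs y c"
proof -
  have below: "monomial_key y b' < monomial_key y b"
    if "b' \<in> sumP_basis xs y" "c b' + (- 1) * e b' \<noteq> 0" for b'
  proof (rule ccontr)
    assume not_below: "\<not> monomial_key y b' < monomial_key y b"
    show False
    proof (cases "monomial_key y b' = monomial_key y b")
      case True
      then show False using monomial_key_inj[OF that(1) b(1)] \<open>e b = c b\<close> that(2) by simp
    next
      case False
      then show False using vanish that not_below by (simp add: vanishes_above_def)
    qed
  qed
  have "lower_support xs y (\<lambda>p. c p + (- 1) * e p) \<subseteq> lower_support xs y c"
  proof
    fix x assume "x \<in> lower_support xs y (\<lambda>p. c p + (- 1) * e p)"
    then obtain b' where "x \<in> sumP_basis xs y" "b' \<in> sumP_basis xs y" "c b' + (- 1) * e b' \<noteq> 0"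
      "monomial_key y x \<le> monomial_key y b'"
      unfolding lower_support_def by blast
    with below b show "x \<in> lower_support xs y c"
      unfolding lower_support_def by (fastforce dest: order.strict_implies_order)
  qed
  moreover have "b \<in> lower_support xs y c" unfolding lower_support_def using b by blast
  moreover have "b \<notin> lower_support xs y (\<lambda>p. c p + (- 1) * e p)"
    unfolding lower_support_def using below by (auto simp: not_le[symmetric])
  ultimately show ?thesis by blast
qed

locale sumP_submodule =
  fixes xs :: "nat list" and Q :: "nat \<Rightarrow> (nat \<times> (int \<Rightarrow> int) \<Rightarrow> 'k::ring_1) set"
  assumes Q_sumP: "Q y \<subseteq> sumP xs y"
    and Q_zero: "(\<lambda>_. 0) \<in> Q y"
    and Q_add: "c \<in> Q y \<Longrightarrow> d \<in> Q y \<Longrightarrow> (\<lambda>p. c p + d p) \<in> Q y"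
    and Q_scale: "c \<in> Q y \<Longrightarrow> (\<lambda>p. a * c p) \<in> Q y"
    and Q_act: "\<psi> \<in> FSB_hom y' y \<Longrightarrow> c \<in> Q y \<Longrightarrow> sumP_act xs y' y \<psi> c \<in> Q y'"
begin

definition lead_ideal :: "nat \<times> nat \<times> (int \<Rightarrow> int) \<Rightarrow> 'k set" where
  "lead_ideal b = {c (snd b) | c. c \<in> Q (fst b) \<and> vanishes_above xs (fst b) (snd b) c}"

lemma left_ideal_lead_ideal: "left_ideal (lead_ideal b)"
proof -
  have scale: "r * a \<in> lead_ideal b" if "a \<in> lead_ideal b" for r a
  proof -
    from that obtain c where "c \<in> Q (fst b)" "vanishes_above xs (fst b) (snd b) c" "a = c (snd b)"
      unfolding lead_ideal_def by blast
    then show ?thesis unfolding lead_ideal_def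
      by (intro CollectI exI[of _ "\<lambda>p. r * c p"]) (auto simp: vanishes_above_def Q_scale)
  qed
  have add: "a + a' \<in> lead_ideal b" if "a \<in> lead_ideal b" "a' \<in> lead_ideal b" for a a'
  proof -
    from that obtain c c' where "c \<in> Q (fst b)" "vanishes_above xs (fst b) (snd b) c" "a = c (snd b)"
      "c' \<in> Q (fst b)" "vanishes_above xs (fst b) (snd b) c'" "a' = c' (snd b)"
      unfolding lead_ideal_def by blast
    then show ?thesis unfolding lead_ideal_def
      by (intro CollectI exI[of _ "\<lambda>p. c p + c' p"]) (auto simp: vanishes_above_def Q_add)
  qed
  have "0 \<in> lead_ideal b" unfolding lead_ideal_def
    by (intro CollectI exI[of _ "\<lambda>_. 0"]) (auto simp: vanishes_above_def Q_zero)
  moreover have "- a \<in> lead_ideal b" if "a \<in> lead_ideal b" for a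
    using scale[OF that, of "- 1"] by simp
  ultimately show ?thesis using scale add unfolding left_ideal_def by blast
qed

lemma lead_ideal_mono:
  assumes "b \<in> monomials xs" and "monomial_dvd b b'"
  shows "lead_ideal b \<subseteq> lead_ideal b'"
proof
  obtain y i w where b: "b = (y, i, w)" by (metis prod_cases3)
  then obtain y' \<psi> where b': "b' = (y', i, FSB_comp y' w \<psi>)" and \<psi>: "ordered_surj y' y \<psi>"
    using assms(2) by (cases b') auto
  have basis: "(i, w) \<in> sumP_basis xs y" using assms(1) b by (simp add: monomials_def sumP_basis_def)
  have \<psi>_hom: "\<psi> \<in> FSB_hom y' y" using \<psi> by (simp add: ordered_surj_def)
  fix a assume "a \<in> lead_ideal b"
  then obtain c where "c \<in> Q y" "vanishes_above xs y (i, w) c" "c (i, w) = a"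
    unfolding lead_ideal_def b by auto
  then have "sumP_act xs y' y \<psi> c \<in> Q y'"
    "vanishes_above xs y' (i, FSB_comp y' w \<psi>) (sumP_act xs y' y \<psi> c)"
    "a = sumP_act xs y' y \<psi> c (i, FSB_comp y' w \<psi>)"
    using Q_act[OF \<psi>_hom] sumP_act_vanishes_above[OF \<psi> basis]
      sumP_act_leading_coeff[OF \<psi>_hom basis, where c = c] by auto
  then show "a \<in> lead_ideal b'"
    unfolding lead_ideal_def b' by (intro CollectI exI[of _ "sumP_act xs y' y \<psi> c"]) simp
qed

definition groebner_basis :: "(nat \<times> (nat \<times> (int \<Rightarrow> int) \<Rightarrow> 'k)) list \<Rightarrow> bool" where
  "groebner_basis gens \<longleftrightarrow> (\<forall>g\<in>set gens. snd g \<in> Q (fst g)) \<and>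
     (\<forall>b\<in>monomials xs. \<exists>f\<in>monomials xs. monomial_dvd f b \<and>
        (\<exists>as. set as \<subseteq> gens_lead_coeffs xs gens f \<and> lead_ideal b \<subseteq> left_span as))"

lemma groebner_basis_exists:
  assumes noeth: "left_noetherian TYPE('k)"
  shows "\<exists>gens. groebner_basis gens"
proof -
  obtain F where F: "finite F" "F \<subseteq> monomials xs"
    "\<forall>b\<in>monomials xs. \<exists>f\<in>F. monomial_dvd f b \<and> lead_ideal b \<subseteq> lead_ideal f"
    using good_ideal_family_finite_basis[OF noeth, of "monomials xs" monomial_dvd lead_ideal]
      monomial_dvd_good left_ideal_lead_ideal lead_ideal_mono by blast
  obtain fl where fl: "set fl = F" using finite_list[OF F(1)] by blast
  obtain as where as: "\<And>f. set (as f) \<subseteq> lead_ideal f \<and> left_span (as f) = lead_ideal f"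
    using left_ideal_finitely_generated[OF noeth left_ideal_lead_ideal] by metis
  define wit where
    "wit f a = (SOME c. c \<in> Q (fst f) \<and> vanishes_above xs (fst f) (snd f) c \<and> c (snd f) = a)" for f a
  have wit: "wit f a \<in> Q (fst f) \<and> vanishes_above xs (fst f) (snd f) (wit f a) \<and> wit f a (snd f) = a"
    if "a \<in> lead_ideal f" for f a
  proof -
    from that obtain c where "c \<in> Q (fst f) \<and> vanishes_above xs (fst f) (snd f) c \<and> c (snd f) = a"
      unfolding lead_ideal_def by blast
    then show ?thesis unfolding wit_def
      by (rule someI[where P = "\<lambda>c. c \<in> Q (fst f) \<and> vanishes_above xs (fst f) (snd f) c \<and> c (snd f) = a"])
  qed
  define gens where "gens = concat (map (\<lambda>f. map (\<lambda>a. (fst f, wit f a)) (as f)) fl)"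
  have gens_Q: "snd g \<in> Q (fst g)" if "g \<in> set gens" for g
  proof -
    from that obtain f a where "a \<in> set (as f)" "g = (fst f, wit f a)" by (auto simp: gens_def)
    then show ?thesis using wit as by (metis snd_conv fst_conv subsetD)
  qed
  have cover: "set (as f) \<subseteq> gens_lead_coeffs xs gens f" if "f \<in> F" for f
  proof
    fix a assume a: "a \<in> set (as f)"
    then have "(fst f, wit f a) \<in> set gens" using that fl by (auto simp: gens_def)
    moreover have "a \<in> lead_ideal f" using as a by blast
    ultimately show "a \<in> gens_lead_coeffs xs gens f"
      using wit[OF \<open>a \<in> lead_ideal f\<close>] unfolding gens_lead_coeffs_def
      by (intro CollectI exI[of _ "wit f a"]) simp
  qed
  have "\<exists>f\<in>monomials xs. monomial_dvd f b \<and>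
      (\<exists>as. set as \<subseteq> gens_lead_coeffs xs gens f \<and> lead_ideal b \<subseteq> left_span as)"
    if "b \<in> monomials xs" for b
  proof -
    from F(3) that have "\<exists>f\<in>F. monomial_dvd f b \<and> lead_ideal b \<subseteq> lead_ideal f" by (rule bspec)
    then obtain f where f: "f \<in> F" "monomial_dvd f b" "lead_ideal b \<subseteq> lead_ideal f" by blast
    then have "lead_ideal b \<subseteq> left_span (as f)" using as[of f] by simp
    then show ?thesis using f(1,2) F(2) cover[OF f(1)] by blast
  qed
  with gens_Q have "groebner_basis gens" unfolding groebner_basis_def by blast
  then show ?thesis ..
qed

lemma sum_in_Q: "(\<And>q. q \<in> A \<Longrightarrow> h q \<in> Q y) \<Longrightarrow> (\<lambda>p. \<Sum>q\<in>A. h q p) \<in> Q y"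
proof (induction A rule: infinite_finite_induct)
  case (insert q A)
  then have "(\<lambda>p. h q p + (\<Sum>q\<in>A. h q p)) \<in> Q y" by (intro Q_add) auto
  then show ?case using insert by simp
qed (simp_all add: Q_zero)

lemma sumP_lift_in_Q:
  assumes "\<forall>g\<in>set gens. snd g \<in> Q (fst g)"
  shows "sumP_lift xs gens y c \<in> Q y"
  unfolding sumP_lift_def
proof (rule sum_in_Q)
  fix q assume "q \<in> sumP_basis (map fst gens) y"
  then have "fst q < length gens" "snd q \<in> FSB_hom y (fst (gens ! fst q))"
    by (auto simp: sumP_basis_def)
  then show "(\<lambda>p. c q * sumP_act xs y (fst (gens ! fst q)) (snd q) (snd (gens ! fst q)) p) \<in> Q y"
    using assms by (intro Q_scale Q_act) auto
qed

text \<open>Division algorithm: subtracting a suitable element of the image cancels the leading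
  term, which strictly shrinks the finite lower support.\<close>

lemma groebner_basis_spans:
  assumes G: "groebner_basis gens"
  shows "c \<in> Q y \<Longrightarrow> c \<in> sumP_lift xs gens y ` sumP (map fst gens) y"
proof (induction "card (lower_support xs y c)" arbitrary: c rule: less_induct)
  case less
  let ?lift = "sumP_lift xs gens y"
  have gens_Q: "\<forall>g\<in>set gens. snd g \<in> Q (fst g)" using G by (simp add: groebner_basis_def)
  show ?case
  proof (cases "c = (\<lambda>_. 0)")
    case True
    show ?thesis
      by (rule image_eqI[where x = "\<lambda>_. 0"]) (simp_all add: True sumP_lift_zero sumP_zero)
  next
    case False
    have "c \<in> sumP xs y" using less.prems Q_sumP by blast
    from exists_leading_monomial[OF this False] obtain i w where
      b: "(i, w) \<in> sumP_basis xs y" "c (i, w) \<noteq> 0" "vanishes_above xs y (i, w) c"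
      by auto
    then have "(y, i, w) \<in> monomials xs" by (simp add: monomials_def sumP_basis_def)
    with G obtain f as where f: "f \<in> monomials xs" "monomial_dvd f (y, i, w)"
      "set as \<subseteq> gens_lead_coeffs xs gens f" "lead_ideal (y, i, w) \<subseteq> left_span as"
      unfolding groebner_basis_def by meson
    obtain yf wf \<psi> where f_eq: "f = (yf, i, wf)" and \<psi>: "ordered_surj y yf \<psi>" "w = FSB_comp y wf \<psi>"
      using f(2) by (cases f) auto
    have "c (i, w) \<in> lead_ideal (y, i, w)" using less.prems b(3) unfolding lead_ideal_def by auto
    also have "\<dots> \<subseteq> left_span as" by (rule f(4))
    also have "\<dots> \<subseteq> image_lead_coeffs xs gens y (i, w)"
    proof (rule left_span_least[OF left_ideal_image_lead_coeffs])
      show "set as \<subseteq> image_lead_coeffs xs gens y (i, w)"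
        using f(3) gens_lead_coeffs_subset_image_lead_coeffs[OF f(1)[unfolded f_eq] \<psi>(1)]
        unfolding f_eq \<psi>(2) by blast
    qed
    finally obtain e where e: "e \<in> sumP (map fst gens) y" "vanishes_above xs y (i, w) (?lift e)"
      "c (i, w) = ?lift e (i, w)"
      unfolding image_lead_coeffs_def by blast
    define c' where "c' = (\<lambda>p. c p + (- 1) * ?lift e p)"
    have "c' \<in> Q y" unfolding c'_def using less.prems sumP_lift_in_Q[OF gens_Q] by (intro Q_add Q_scale)
    moreover have "card (lower_support xs y c') < card (lower_support xs y c)"
      unfolding c'_def using lower_support_cancel_leading[OF b(1,2,3) e(2) e(3)[symmetric]]
      by (intro psubset_card_mono) (auto simp: lower_support_def finite_sumP_basis)
    ultimately obtain e' where e': "e' \<in> sumP (map fst gens) y" "c' = ?lift e'"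
      using less.hyps by blast
    have "c = ?lift (\<lambda>q. e' q + e q)" by (simp add: sumP_lift_add e'(2)[symmetric] c'_def)
    then show ?thesis using sumP_add[OF e'(1) e(1)] by blast
  qed
qed

theorem finitely_generated:
  assumes "left_noetherian TYPE('k)"
  shows "\<exists>gens. \<forall>y. sumP_lift xs gens y ` sumP (map fst gens) y = Q y"
proof -
  obtain gens where G: "groebner_basis gens" using groebner_basis_exists[OF assms] ..
  then have "sumP_lift xs gens y ` sumP (map fst gens) y \<subseteq> Q y" for y
    using sumP_lift_in_Q by (auto simp: groebner_basis_def)
  then show ?thesis using groebner_basis_spans[OF G] by blast
qed

end

definition sumP_epi ::
  "nat list \<Rightarrow> (nat \<Rightarrow> (nat \<times> (int \<Rightarrow> int) \<Rightarrow> 'k::ring_1) \<Rightarrow> 'm) \<Rightarrow> (nat \<Rightarrow> 'm set)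
    \<Rightarrow> (nat \<Rightarrow> 'm \<Rightarrow> 'm \<Rightarrow> 'm) \<Rightarrow> (nat \<Rightarrow> 'k \<Rightarrow> 'm \<Rightarrow> 'm)
    \<Rightarrow> (nat \<Rightarrow> nat \<Rightarrow> (int \<Rightarrow> int) \<Rightarrow> 'm \<Rightarrow> 'm) \<Rightarrow> bool" where
  "sumP_epi xs F C add sc act \<longleftrightarrow>
     (\<forall>y. \<forall>c\<in>sumP xs y. F y c \<in> C y)
   \<and> (\<forall>y. \<forall>c\<in>sumP xs y. \<forall>d\<in>sumP xs y. F y (\<lambda>p. c p + d p) = add y (F y c) (F y d))
   \<and> (\<forall>y a. \<forall>c\<in>sumP xs y. F y (\<lambda>p. a * c p) = sc y a (F y c))
   \<and> (\<forall>y y'. \<forall>\<psi>\<in>FSB_hom y' y. \<forall>c\<in>sumP xs y. F y' (sumP_act xs y' y \<psi> c) = act y' y \<psi> (F y c))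
   \<and> (\<forall>y. F y ` sumP xs y = C y)"

lemma sumP_epiD:
  assumes "sumP_epi xs F C add sc act"
  shows "c \<in> sumP xs y \<Longrightarrow> F y c \<in> C y"
    and "c \<in> sumP xs y \<Longrightarrow> d \<in> sumP xs y \<Longrightarrow> F y (\<lambda>p. c p + d p) = add y (F y c) (F y d)"
    and "c \<in> sumP xs y \<Longrightarrow> F y (\<lambda>p. a * c p) = sc y a (F y c)"
    and "\<psi> \<in> FSB_hom y' y \<Longrightarrow> c \<in> sumP xs y \<Longrightarrow> F y' (sumP_act xs y' y \<psi> c) = act y' y \<psi> (F y c)"
    and "F y ` sumP xs y = C y"
  using assms unfolding sumP_epi_def by simp_all

lemma FSBop_fg_iff: "FSBop_fg C add z sc act \<longleftrightarrow> (\<exists>xs F. sumP_epi xs F C add sc act)"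
  by (simp add: FSBop_fg_def sumP_epi_def)

lemma left_module_scale_zero:
  assumes "left_module V add z sc" and x: "x \<in> V"
  shows "sc 0 x = z"
proof -
  have closed: "sc 0 x \<in> V" and z: "z \<in> V"
    and assoc: "\<forall>u\<in>V. \<forall>v\<in>V. \<forall>w\<in>V. add (add u v) w = add u (add v w)"
    and comm: "\<forall>u\<in>V. \<forall>v\<in>V. add u v = add v u" and zero: "\<forall>u\<in>V. add z u = u"
    and inverse: "\<forall>u\<in>V. \<exists>v\<in>V. add u v = z" and distrib: "sc (0 + 0) x = add (sc 0 x) (sc 0 x)"
    using assms unfolding left_module_def by blast+
  let ?u = "sc 0 x"
  obtain v where v: "v \<in> V" "add ?u v = z" using inverse closed by blast
  have "z = add (add ?u ?u) v" using distrib v by simp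
  also have "\<dots> = add ?u z" using assoc closed v by simp
  also have "\<dots> = add z ?u" using comm closed z by blast
  also have "\<dots> = ?u" using zero closed by blast
  finally show ?thesis by simp
qed

lemma sumP_epi_preimage_submodule:
  fixes F :: "nat \<Rightarrow> (nat \<times> (int \<Rightarrow> int) \<Rightarrow> 'k::ring_1) \<Rightarrow> 'm"
  assumes M: "FSBop_module C add z sc act" and F: "sumP_epi xs F C add sc act"
    and N: "FSBop_submodule C add z sc act N"
  shows "sumP_submodule xs (\<lambda>y. {c \<in> sumP xs y. F y c \<in> N y})"
proof
  fix y
  have "F y (\<lambda>_. 0) = sc y 0 (F y (\<lambda>_. 0))"
    using sumP_epiD(3)[OF F sumP_zero, of y 0] by simp
  also have "\<dots> = z y"
    using M sumP_epiD(1)[OF F sumP_zero] unfolding FSBop_module_def by (blast intro: left_module_scale_zero)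
  finally show "(\<lambda>_. 0) \<in> {c \<in> sumP xs y. F y c \<in> N y}"
    using N sumP_zero by (simp add: FSBop_submodule_def)
  show "{c \<in> sumP xs y. F y c \<in> N y} \<subseteq> sumP xs y" by blast
  fix c
  assume "c \<in> {c \<in> sumP xs y. F y c \<in> N y}"
  then have c: "c \<in> sumP xs y" "F y c \<in> N y" by simp_all
  have N_scale: "sc y a x \<in> N y" and N_add: "x \<in> N y \<Longrightarrow> x' \<in> N y \<Longrightarrow> add y x x' \<in> N y"
    and N_act: "\<psi> \<in> FSB_hom y' y \<Longrightarrow> act y' y \<psi> x \<in> N y'"
    if "x \<in> N y" for a x x' \<psi> y'
    using N that unfolding FSBop_submodule_def by blast+
  show "(\<lambda>p. a * c p) \<in> {c \<in> sumP xs y. F y c \<in> N y}" for a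
    using c sumP_scale N_scale sumP_epiD(3)[OF F c(1)] by simp
  show "(\<lambda>p. c p + d p) \<in> {c \<in> sumP xs y. F y c \<in> N y}" if "d \<in> {c \<in> sumP xs y. F y c \<in> N y}" for d
    using c that sumP_add N_add sumP_epiD(2)[OF F c(1)] by auto
  show "sumP_act xs y' y \<psi> c \<in> {c \<in> sumP xs y'. F y' c \<in> N y'}" if "\<psi> \<in> FSB_hom y' y" for \<psi> y'
    using c that sumP_act_in_sumP N_act sumP_epiD(4)[OF F that c(1)] by simp
qed

lemma sumP_epi_comp_lift:
  assumes F: "sumP_epi xs F C add sc act"
    and image: "\<And>y. F y ` sumP_lift xs gens y ` sumP (map fst gens) y = N y"
  shows "sumP_epi (map fst gens) (\<lambda>y c. F y (sumP_lift xs gens y c)) N add sc act"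
  unfolding sumP_epi_def
proof (intro conjI allI ballI)
  fix y y' :: nat and a c d \<psi>
  let ?lift = "sumP_lift xs gens"
  note lift = sumP_lift_in_sumP[of xs gens]
  show "F y (?lift y c) \<in> N y" if "c \<in> sumP (map fst gens) y" using image that by blast
  show "F y (?lift y (\<lambda>p. c p + d p)) = add y (F y (?lift y c)) (F y (?lift y d))"
    using sumP_epiD(2)[OF F lift lift] by (simp add: sumP_lift_add)
  show "F y (?lift y (\<lambda>p. a * c p)) = sc y a (F y (?lift y c))"
    using sumP_epiD(3)[OF F lift] by (simp add: sumP_lift_scale)
  show "F y' (?lift y' (sumP_act (map fst gens) y' y \<psi> c)) = act y' y \<psi> (F y (?lift y c))"
    if "\<psi> \<in> FSB_hom y' y"
    using sumP_epiD(4)[OF F that lift] by (simp add: sumP_lift_natural[OF that])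
  show "(\<lambda>c. F y (?lift y c)) ` sumP (map fst gens) y = N y"
    using image by (simp add: image_image)
qed

theorem mainTheorem1:
  fixes C N :: "nat \<Rightarrow> 'm set"
    and add :: "nat \<Rightarrow> 'm \<Rightarrow> 'm \<Rightarrow> 'm"
    and z :: "nat \<Rightarrow> 'm"
    and sc :: "nat \<Rightarrow> 'k::ring_1 \<Rightarrow> 'm \<Rightarrow> 'm"
    and act :: "nat \<Rightarrow> nat \<Rightarrow> (int \<Rightarrow> int) \<Rightarrow> 'm \<Rightarrow> 'm"
  assumes "left_noetherian TYPE('k)"
    and "FSBop_module C add z sc act"
    and "FSBop_fg C add z sc act"
    and "FSBop_submodule C add z sc act N"
  shows "FSBop_fg N add z sc act"
proof -
  obtain xs F where F: "sumP_epi xs F C add sc act" using assms(3) by (auto simp: FSBop_fg_iff)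
  define Q where "Q y = {c \<in> sumP xs y. F y c \<in> N y}" for y
  interpret sumP_submodule xs Q
    unfolding Q_def by (rule sumP_epi_preimage_submodule[OF assms(2) F assms(4)])
  obtain gens where gens: "\<And>y. sumP_lift xs gens y ` sumP (map fst gens) y = Q y"
    using finitely_generated[OF assms(1)] by blast
  have "F y ` Q y = N y" for y
  proof -
    have "N y \<subseteq> F y ` sumP xs y" using sumP_epiD(5)[OF F] assms(4) by (simp add: FSBop_submodule_def)
    then show ?thesis unfolding Q_def by blast
  qed
  then have "sumP_epi (map fst gens) (\<lambda>y c. F y (sumP_lift xs gens y c)) N add sc act"
    using sumP_epi_comp_lift[OF F] gens by simp
  then show ?thesis by (auto simp: FSBop_fg_iff)
qed

end
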